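(* If $f:\subseteq\mathbf R^m\to\mathbf R^m$ is real recursive, then there is a real recursive function $g:\subseteq\mathbf R^{m+1}\to\mathbf R^m$ extending the function $g'$ defined by $\operatorname{dom} g'=\{(\vec v,k)\in\mathbf R^m\times(\mathbf N\setminus\{0\})\mid \vec v\in\operatorname{dom} f^k\}$ and $g'(\vec v,k)=f^k\vec v$, where $f^k=f\circ\dots\circ f$ ($k$ times); i.e. $(\vec v,k)\in\operatorname{dom} g$ and $g(\vec v,k)=f^k\vec v$ whenever $(\vec v,k)\in\operatorname{dom} g'$.
   Context: Functions may be partial: $f:\subseteq\mathbf R^m\to\mathbf R^n$ has domain $\operatorname{dom} f\subseteq\mathbf R^m$; $\mathbf R^0$ is a one-point space. Juxtaposition: $[g_0,\dots,g_{n-1}]\vec x=(g_0\vec x,\dots,g_{n-1}\vec x)$, defined exactly when $\vec x\in\bigcap_j\operatorname{dom} g_j$. Composition: $(f\circ g)\vec x=f(g\vec x)$, defined exactly when $\vec x\in\operatorname{dom} g$ and $g\vec x\in\operatorname{dom} f$. Differential recursion: for $f:\subseteq\mathbf R^m\to\mathbf R^n$, $g:\subseteq\mathbf R^{m+1+n}\to\mathbf R^n$ and $\vec v\in\mathbf R^m$, let $H_{\vec v}$ be the set of all $h:\subseteq\mathbf R\to\mathbf R^n$ such that (1) $\operatorname{dom} h$ is empty or a (possibly unbounded) interval containing $0$; (2) $\vec v\in\operatorname{dom} f$ if $\operatorname{dom} h\ne\emptyset$; (3) $(\vec v,\tau,h\tau)\in\operatorname{dom} g$ for every $\tau\in\operatorname{dom}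 h$; (4) $h t=f\vec v+\int_0^t g(\vec v,\tau,h\tau)\,d\tau$ for every $t\in\operatorname{dom} h$. A function $h\in H$ is unique in a set $H$ if for every $h'\in H$, $h'$ and $h$ agree on $\operatorname{dom} h\cap\operatorname{dom} h'$. Let $K_{\vec v}$ be the set of functions unique in $H_{\vec v}$ (these agree on common domains) and let $h_{\vec v}$ be their union. Define $\mathrm{PR}(f,g):\subseteq\mathbf R^{m+1}\to\mathbf R^n$ by $\operatorname{dom}\mathrm{PR}(f,g)=\{(\vec v,t)\mid t\in\operatorname{dom} h_{\vec v}\}$ and $\mathrm{PR}(f,g)(\vec v,t)=h_{\vec v}t$. The class of real primitive recursive functions is the smallest class containing the nullary functions with values $0$, $1$, $-1$ and closed under juxtaposition, composition and $\mathrm{PR}$. Minimization: for $f:\subseteq\mathbf R^{m+1}\to\mathbf R$ and $\vec v\in\mathbf R^m$, say $t^+$ is defined if there is $t\ge0$ with $(\vec v,t)\in\operatorname{dom} f$, $f(\vec v,t)=0$ and $(\vec v,\tau)\in\operatorname{dom} f$ for all $\tau\in[-t,t]$, in which case $t^+=\inf\{t\ge0\mid (\vec v,t)\in\operatorname{dom} f,\ f(\vec v,t)=0\}$; symmetrically $t^-$ is defined if there is $t\le0$ with $f(\vec v,t)=0$ and $(\vec v,\tau)\in\operatorname{dom} f$ for all $\tau\in[t,-t]$, in which case $t^-=\sup\{t\le0\mid (\vec v,t)\in\operatorname{dom} f,\ f(\vec v,t)=0\}$. Then $\mathrm{MN}f\,\vec v$ is defined iff at least one of $t^+,t^-$ is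 defined; if only one is defined it is the value; if both are, the value is $t^+$ when $t^+<-t^-$ and $t^-$ otherwise. The class of real recursive functions is the smallest class containing all real primitive recursive functions and closed under juxtaposition, composition, $\mathrm{PR}$ and $\mathrm{MN}$. *)

theory Defs
  imports "HOL-Analysis.Analysis"
begin

text \<open>A partial function from R^m to R^n is modelled as a map from real lists to
  optional real lists; its arity (m,n) is tracked by the inductive predicates below,
  and all constructions only produce maps whose domain consists of lists of length m
  and whose values are lists of length n.\<close>

type_synonym pfun = "real list \<Rightarrow> real list option"

definition pdom :: "pfun \<Rightarrow> real list set" where
  "pdom f = {x. f x \<noteq> None}"

definition const0 :: "real \<Rightarrow> pfun" where
  "const0 c xs = (if xs = [] then Some [c] else None)"

definition juxt :: "nat \<Rightarrow> pfun list \<Rightarrow> pfun" where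
  "juxt m gs xs = (if length xs = m \<and> (\<forall>g\<in>set gs. g xs \<noteq> None)
      then Some (map (\<lambda>g. hd (the (g xs))) gs) else None)"

definition pcomp :: "pfun \<Rightarrow> pfun \<Rightarrow> pfun" where
  "pcomp f g xs = (case g xs of None \<Rightarrow> None | Some y \<Rightarrow> f y)"

definition PR_H :: "nat \<Rightarrow> pfun \<Rightarrow> pfun \<Rightarrow> real list \<Rightarrow> (real \<Rightarrow> real list option) set" where
  "PR_H n f g v = {h.
     (dom h = {} \<or> (is_interval (dom h) \<and> 0 \<in> dom h)) \<and>
     (dom h \<noteq> {} \<longrightarrow> v \<in> pdom f) \<and>
     (\<forall>\<tau>\<in>dom h. length (the (h \<tau>)) = n \<and> v @ [\<tau>] @ the (h \<tau>) \<in> pdom g) \<and>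
     (\<forall>t\<in>dom h. \<forall>i<n.
        (0 \<le> t \<longrightarrow> ((\<lambda>\<tau>. the (g (v @ [\<tau>] @ the (h \<tau>))) ! i)
                        has_integral (the (h t) ! i - the (f v) ! i)) {0..t}) \<and>
        (t < 0 \<longrightarrow> ((\<lambda>\<tau>. the (g (v @ [\<tau>] @ the (h \<tau>))) ! i)
                        has_integral (the (f v) ! i - the (h t) ! i)) {t..0}))}"

definition unique_in :: "(real \<Rightarrow> real list option) \<Rightarrow> (real \<Rightarrow> real list option) set \<Rightarrow> bool" where
  "unique_in h H \<longleftrightarrow> h \<in> H \<and> (\<forall>h'\<in>H. \<forall>t\<in>dom h \<inter> dom h'. h t = h' t)"

text \<open>PR(f,g) for f :\<subseteq> R^m \<rightarrow> R^n, g :\<subseteq> R^(m+1+n) \<rightarrow> R^n; h_v is the union of the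
  functions unique in H_v.\<close>
definition PRop :: "nat \<Rightarrow> nat \<Rightarrow> pfun \<Rightarrow> pfun \<Rightarrow> pfun" where
  "PRop m n f g xs =
     (if length xs = m + 1 then
        (let v = butlast xs; t = last xs in
          if \<exists>h. unique_in h (PR_H n f g v) \<and> t \<in> dom h
          then (SOME h. unique_in h (PR_H n f g v) \<and> t \<in> dom h) t
          else None)
      else None)"

definition tplus_def :: "pfun \<Rightarrow> real list \<Rightarrow> bool" where
  "tplus_def f v \<longleftrightarrow> (\<exists>t\<ge>0. f (v @ [t]) = Some [0] \<and> (\<forall>\<tau>\<in>{-t..t}. v @ [\<tau>] \<in> pdom f))"

definition tplus :: "pfun \<Rightarrow> real list \<Rightarrow> real" where
  "tplus f v = Inf {t. t \<ge> 0 \<and> f (v @ [t]) = Some [0]}"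

definition tminus_def :: "pfun \<Rightarrow> real list \<Rightarrow> bool" where
  "tminus_def f v \<longleftrightarrow> (\<exists>t\<le>0. f (v @ [t]) = Some [0] \<and> (\<forall>\<tau>\<in>{t..-t}. v @ [\<tau>] \<in> pdom f))"

definition tminus :: "pfun \<Rightarrow> real list \<Rightarrow> real" where
  "tminus f v = Sup {t. t \<le> 0 \<and> f (v @ [t]) = Some [0]}"

definition MNop :: "nat \<Rightarrow> pfun \<Rightarrow> pfun" where
  "MNop m f v =
     (if length v \<noteq> m then None
      else if tplus_def f v \<and> tminus_def f v then
        (if tplus f v < - tminus f v then Some [tplus f v] else Some [tminus f v])
      else if tplus_def f v then Some [tplus f v]
      else if tminus_def f v then Some [tminus f v]
      else None)"

inductive rprim :: "nat \<Rightarrow> nat \<Rightarrow> pfun \<Rightarrow> bool" where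
  rp_zero: "rprim 0 1 (const0 0)"
| rp_one: "rprim 0 1 (const0 1)"
| rp_mone: "rprim 0 1 (const0 (-1))"
| rp_juxt: "(\<forall>g\<in>set gs. rprim m 1 g) \<Longrightarrow> rprim m (length gs) (juxt m gs)"
| rp_comp: "rprim k n f \<Longrightarrow> rprim m k g \<Longrightarrow> rprim m n (pcomp f g)"
| rp_PR: "rprim m n f \<Longrightarrow> rprim (m + 1 + n) n g \<Longrightarrow> rprim (m + 1) n (PRop m n f g)"

inductive rrec :: "nat \<Rightarrow> nat \<Rightarrow> pfun \<Rightarrow> bool" where
  rr_prim: "rprim m n f \<Longrightarrow> rrec m n f"
| rr_juxt: "(\<forall>g\<in>set gs. rrec m 1 g) \<Longrightarrow> rrec m (length gs) (juxt m gs)"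
| rr_comp: "rrec k n f \<Longrightarrow> rrec m k g \<Longrightarrow> rrec m n (pcomp f g)"
| rr_PR: "rrec m n f \<Longrightarrow> rrec (m + 1 + n) n g \<Longrightarrow> rrec (m + 1) n (PRop m n f g)"
| rr_MN: "rrec (m + 1) 1 f \<Longrightarrow> rrec m 1 (MNop m f)"

primrec piter :: "pfun \<Rightarrow> nat \<Rightarrow> pfun" where
  "piter f 0 = Some"
| "piter f (Suc k) = (\<lambda>v. Option.bind (piter f k v) f)"

end

theory Submission
  imports Defs
begin

(* Idea: iterate f by an ODE with switching.  The state is (y, z) in R^m x R^m, started at
   (v, v), and time is cut into periods [2 pi j, 2 pi j + 2 pi].  On the first half of a period
   only z moves, z' = gain_z t * (f y - z), and it reaches f y exactly at the end of that half;
   on the second half only y moves, y' = gain_y t * (z - y), and it catches up with z.  Hence at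
   time (2k - 1) pi, the middle of period k - 1, the z-half of the state is f^k v.  The gains
   sin/(1 + cos) and -sin/(1 - cos) (made total with a Heaviside switch) are real recursive, so
   this solution is PR(D, G) for real recursive D and G, because every other member of the set
   H_v from the definition of PR agrees with it. *)

text \<open>Every real recursive function of arity \<open>(m,n)\<close> is defined only on lists of length \<open>m\<close>
  and returns lists of length \<open>n\<close>; for \<open>PR\<close> this holds because its values are values of
  members of \<open>H\<^sub>v\<close>, which have length \<open>n\<close>.\<close>
lemma PRop_arity:
  assumes "PRop m n f g xs = Some ys"
  shows "length xs = m + 1 \<and> length ys = n"
proof -
  let ?P = "\<lambda>h. unique_in h (PR_H n f g (butlast xs)) \<and> last xs \<in> dom h"
  have l: "length xs = m + 1" and ex: "\<exists>h. ?P h"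
    using assms unfolding PRop_def Let_def by (auto split: if_splits)
  have P: "?P (SOME h. ?P h)" by (rule someI_ex[OF ex])
  have val: "(SOME h. ?P h) (last xs) = Some ys" using assms l ex unfolding PRop_def Let_def by simp
  have "(SOME h. ?P h) \<in> PR_H n f g (butlast xs)" "last xs \<in> dom (SOME h. ?P h)"
    using P unfolding unique_in_def by auto
  then have "length (the ((SOME h. ?P h) (last xs))) = n" unfolding PR_H_def by blast
  then show ?thesis using l val by simp
qed

lemma rrec_arity:
  assumes "rrec m n f" "f xs = Some ys"
  shows "length xs = m \<and> length ys = n"
  using assms
proof (induction arbitrary: xs ys rule: rrec.induct)
  case (rr_prim m n f)
  then show ?case
  proof (induction arbitrary: xs ys rule: rprim.induct)
    case (rp_PR m n f g)
    then show ?case by (blast dest: PRop_arity)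
  next
    case (rp_comp k n f m g)
    then show ?case by (cases "g xs") (auto simp: pcomp_def)
  next
    case (rp_juxt gs m)
    then show ?case by (auto simp: juxt_def split: if_splits)
  qed (auto simp: const0_def split: if_splits)
next
  case (rr_PR m n f g)
  then show ?case by (blast dest: PRop_arity)
next
  case (rr_MN m f)
  then show ?case by (auto simp: MNop_def split: if_splits)
next
  case (rr_comp k n f m g)
  then show ?case by (cases "g xs") (auto simp: pcomp_def)
next
  case (rr_juxt gs m)
  then show ?case by (auto simp: juxt_def split: if_splits)
qed

definition total_rec :: "nat \<Rightarrow> (real list \<Rightarrow> real) \<Rightarrow> bool" where
  "total_rec n \<phi> \<longleftrightarrow> (\<exists>S. rrec n 1 S \<and> (\<forall>xs. length xs = n \<longrightarrow> S xs = Some [\<phi> xs]))"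

definition total_rec_map :: "nat \<Rightarrow> nat \<Rightarrow> (real list \<Rightarrow> real list) \<Rightarrow> bool" where
  "total_rec_map n k \<Phi> \<longleftrightarrow> (\<exists>S. rrec n k S \<and> (\<forall>xs. length xs = n \<longrightarrow> S xs = Some (\<Phi> xs)))"

lemma total_rec_cong:
  "total_rec n \<phi> \<Longrightarrow> n = n' \<Longrightarrow> (\<And>xs. length xs = n \<Longrightarrow> \<phi> xs = \<psi> xs) \<Longrightarrow> total_rec n' \<psi>"
  unfolding total_rec_def by metis

lemma total_rec_map_cong:
  "total_rec_map n k \<Phi> \<Longrightarrow> (\<And>xs. length xs = n \<Longrightarrow> \<Phi> xs = \<Psi> xs) \<Longrightarrow> total_rec_map n k \<Psi>"
  unfolding total_rec_map_def by metis

lemma total_rec_map_juxt: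
  assumes "\<And>j. j < k \<Longrightarrow> total_rec n (\<phi>s j)"
  shows "total_rec_map n k (\<lambda>xs. map (\<lambda>j. \<phi>s j xs) [0..<k])"
proof -
  have "\<forall>j. \<exists>S. j < k \<longrightarrow> rrec n 1 S \<and> (\<forall>xs. length xs = n \<longrightarrow> S xs = Some [\<phi>s j xs])"
    using assms unfolding total_rec_def by blast
  then obtain S where S: "\<And>j. j < k \<Longrightarrow> rrec n 1 (S j) \<and> (\<forall>xs. length xs = n \<longrightarrow> S j xs = Some [\<phi>s j xs])"
    by metis
  have "rrec n (length (map S [0..<k])) (juxt n (map S [0..<k]))" by (rule rr_juxt) (use S in auto)
  moreover have "juxt n (map S [0..<k]) xs = Some (map (\<lambda>j. \<phi>s j xs) [0..<k])" if "length xs = n" for xs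
    using that S by (auto simp: juxt_def)
  ultimately show ?thesis unfolding total_rec_map_def by (intro exI[of _ "juxt n (map S [0..<k])"]) auto
qed

lemma total_rec_comp_map:
  assumes "total_rec k \<phi>" "total_rec_map n k \<Phi>"
  shows "total_rec n (\<lambda>xs. \<phi> (\<Phi> xs))"
proof -
  obtain S where S: "rrec n k S" "\<And>xs. length xs = n \<Longrightarrow> S xs = Some (\<Phi> xs)"
    using assms(2) unfolding total_rec_map_def by auto
  obtain P where P: "rrec k 1 P" "\<And>ys. length ys = k \<Longrightarrow> P ys = Some [\<phi> ys]"
    using assms(1) unfolding total_rec_def by auto
  have "length (\<Phi> xs) = k" if "length xs = n" for xs using rrec_arity[OF S(1) S(2)[OF that]] by simp
  then show ?thesis unfolding total_rec_def
    by (intro exI[of _ "pcomp P S"] conjI rr_comp[OF P(1) S(1)]) (auto simp: pcomp_def S(2) P(2))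
qed

lemma total_rec_comp:
  assumes "total_rec k \<phi>" "\<And>j. j < k \<Longrightarrow> total_rec n (\<psi>s j)"
  shows "total_rec n (\<lambda>xs. \<phi> (map (\<lambda>j. \<psi>s j xs) [0..<k]))"
  using total_rec_comp_map[OF assms(1) total_rec_map_juxt[OF assms(2)]] .

lemma total_rec_comp1: "total_rec 1 \<phi> \<Longrightarrow> total_rec n \<psi> \<Longrightarrow> total_rec n (\<lambda>xs. \<phi> [\<psi> xs])"
  using total_rec_comp[of 1 \<phi> n "\<lambda>_. \<psi>"] by simp

lemma total_rec_comp2:
  "total_rec 2 \<phi> \<Longrightarrow> total_rec n \<psi>\<^sub>1 \<Longrightarrow> total_rec n \<psi>\<^sub>2 \<Longrightarrow> total_rec n (\<lambda>xs. \<phi> [\<psi>\<^sub>1 xs, \<psi>\<^sub>2 xs])"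
  using total_rec_comp[of 2 \<phi> n "\<lambda>j. if j = 0 then \<psi>\<^sub>1 else \<psi>\<^sub>2"] by (simp add: numeral_2_eq_2 upt_rec)

lemma total_rec_lift0:
  assumes "total_rec 0 \<phi>"
  shows "total_rec n (\<lambda>_. \<phi> [])"
proof -
  obtain S where S: "rrec 0 1 S" "S [] = Some [\<phi> []]" using assms unfolding total_rec_def by auto
  have "rrec n 0 (juxt n [])" using rr_juxt[of "[]" n] by simp
  then show ?thesis unfolding total_rec_def
    by (intro exI[of _ "pcomp S (juxt n [])"] conjI rr_comp[OF S(1)]) (auto simp: pcomp_def juxt_def S(2))
qed

lemma total_rec_const:
  assumes "c = 0 \<or> c = 1 \<or> c = -1"
  shows "total_rec n (\<lambda>_. c)"
proof -
  have "rrec 0 1 (const0 c)" using assms rr_prim[OF rp_zero] rr_prim[OF rp_one] rr_prim[OF rp_mone] by auto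
  then have "total_rec 0 (\<lambda>_. c)" unfolding total_rec_def by (auto simp: const0_def intro!: exI[of _ "const0 c"])
  then show ?thesis using total_rec_lift0 by blast
qed
lemma integral_eq_rebase:
  fixes \<phi> u :: "real \<Rightarrow> real"
  assumes I: "\<forall>\<tau>\<in>{a..b}. (\<phi> has_integral (u \<tau> - u a)) {a..\<tau>}" and c: "c \<in> {a..b}"
  shows "\<forall>\<tau>\<in>{c..b}. (\<phi> has_integral (u \<tau> - u c)) {c..\<tau>}"
proof
  fix \<tau> assume t: "\<tau> \<in> {c..b}"
  then have i1: "(\<phi> has_integral (u \<tau> - u a)) {a..\<tau>}" using I c by auto
  have i2: "(\<phi> has_integral (u c - u a)) {a..c}" using I c by auto
  have int: "\<phi> integrable_on {a..\<tau>}" using i1 by blast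
  have "integral {a..c} \<phi> + integral {c..\<tau>} \<phi> = integral {a..\<tau>} \<phi>"
    by (rule Henstock_Kurzweil_Integration.integral_combine) (use c t int in auto)
  then have "integral {c..\<tau>} \<phi> = u \<tau> - u c" using i1 i2 by (simp add: integral_unique)
  moreover have "\<phi> integrable_on {c..\<tau>}" by (rule integrable_subinterval_real[OF int]) (use c in auto)
  ultimately show "(\<phi> has_integral (u \<tau> - u c)) {c..\<tau>}" by (simp add: has_integral_integral)
qed

lemma integral_eq_continuous:
  fixes \<phi> u :: "real \<Rightarrow> real"
  assumes I: "\<forall>\<tau>\<in>{a..b}. (\<phi> has_integral (u \<tau> - u a)) {a..\<tau>}"
  shows "continuous_on {a..b} u"
proof (cases "a \<le> b")
  case True
  then have "\<phi> integrable_on {a..b}" using I by auto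
  then have "continuous_on {a..b} (\<lambda>x. u a + integral {a..x} \<phi>)"
    by (intro continuous_intros indefinite_integral_continuous_1)
  moreover have "u a + integral {a..x} \<phi> = u x" if "x \<in> {a..b}" for x
  proof -
    have "integral {a..x} \<phi> = u x - u a" using I that integral_unique by blast
    then show ?thesis by simp
  qed
  ultimately show ?thesis using continuous_on_eq by blast
qed simp

lemma integral_eq_deriv:
  fixes \<phi> u :: "real \<Rightarrow> real"
  assumes I: "\<forall>\<tau>\<in>{a..b}. (\<phi> has_integral (u \<tau> - u a)) {a..\<tau>}"
    and pc: "continuous_on {a..b} \<phi>" and x: "a < x" "x < b"
  shows "(u has_real_derivative \<phi> x) (at x)"
proof -
  have "((\<lambda>t. integral {a..t} \<phi>) has_vector_derivative \<phi> x) (at x within {a..b})"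
    by (rule integral_has_vector_derivative[OF pc]) (use x in auto)
  then have "((\<lambda>t. integral {a..t} \<phi>) has_real_derivative \<phi> x) (at x)"
    using x by (simp add: at_within_Icc_at has_real_derivative_iff_has_vector_derivative)
  then have "((\<lambda>t. u a + integral {a..t} \<phi>) has_real_derivative \<phi> x) (at x)"
    using DERIV_add[OF DERIV_const] by fastforce
  then show ?thesis
  proof (rule has_field_derivative_transform_within_open[where S="{a<..<b}"])
    fix y assume "y \<in> {a<..<b}"
    then have "integral {a..y} \<phi> = u y - u a" using I integral_unique by auto
    then show "u a + integral {a..y} \<phi> = u y" by simp
  qed (use x in auto)
qed

text \<open>Differential recursion states its integral equation with base point 0 and signed
  integrals (over \<open>[\<tau>,0]\<close> for negative \<open>\<tau>\<close>); on an interval \<open>[a,b] \<ni> 0\<close> this is the same as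
  an ordinary integral equation based at \<open>a\<close> together with the initial value \<open>u 0 = c\<close>.\<close>
lemma signed_integral_eq_rebase:
  fixes \<phi> u :: "real \<Rightarrow> real"
  assumes ab: "a \<le> 0" "0 \<le> b"
    and I: "\<And>\<tau>. \<tau> \<in> {a..b} \<Longrightarrow> (0 \<le> \<tau> \<longrightarrow> (\<phi> has_integral (u \<tau> - c)) {0..\<tau>}) \<and>
                                  (\<tau> < 0 \<longrightarrow> (\<phi> has_integral (c - u \<tau>)) {\<tau>..0})"
  shows "u 0 = c" "\<forall>\<tau>\<in>{a..b}. (\<phi> has_integral (u \<tau> - u a)) {a..\<tau>}"
proof -
  have "(\<phi> has_integral (u 0 - c)) {0..0}" using I[of 0] ab by auto
  then show u0: "u 0 = c" using has_integral_unique[OF _ has_integral_refl(2)] by fastforce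
  show "\<forall>\<tau>\<in>{a..b}. (\<phi> has_integral (u \<tau> - u a)) {a..\<tau>}"
  proof (cases "a = 0")
    case True then show ?thesis using I u0 by auto
  next
    case False
    then have a: "a < 0" using ab by simp
    have Ia: "(\<phi> has_integral (c - u a)) {a..0}" using I[of a] a ab by auto
    show ?thesis
    proof
      fix \<tau> assume t: "\<tau> \<in> {a..b}"
      show "(\<phi> has_integral (u \<tau> - u a)) {a..\<tau>}"
      proof (cases "0 \<le> \<tau>")
        case True
        have "(\<phi> has_integral (c - u a) + (u \<tau> - c)) {a..\<tau>}"
          by (rule has_integral_combine[OF _ True Ia]) (use a I t True in auto)
        then show ?thesis by simp
      next
        case False
        have It: "(\<phi> has_integral (c - u \<tau>)) {\<tau>..0}" using I t False by auto
        have int: "\<phi> integrable_on {a..0}" using Ia by blast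
        have "integral {a..\<tau>} \<phi> + integral {\<tau>..0} \<phi> = integral {a..0} \<phi>"
          by (rule Henstock_Kurzweil_Integration.integral_combine) (use t False int in auto)
        then have "integral {a..\<tau>} \<phi> = u \<tau> - u a" using Ia It by (simp add: integral_unique)
        moreover have "\<phi> integrable_on {a..\<tau>}" by (rule integrable_subinterval_real[OF int]) (use False in auto)
        ultimately show ?thesis by (simp add: has_integral_integral)
      qed
    qed
  qed
qed

lemma has_integral_zero_integrand:
  fixes \<phi> :: "real \<Rightarrow> real"
  assumes "(\<phi> has_integral X) {s..t}" "\<And>\<sigma>. \<sigma> \<in> {s..t} \<Longrightarrow> \<phi> \<sigma> = 0"
  shows "X = 0"
proof -
  have "((\<lambda>_. 0::real) has_integral X) {s..t}" using assms has_integral_cong[of "{s..t}" \<phi> "\<lambda>_. 0"] by simp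
  then show "X = 0" using has_integral_0 has_integral_unique by blast
qed

lemma ftc_everywhere:
  fixes F F' :: "real \<Rightarrow> real"
  assumes "a \<le> b" "\<And>x. (F has_real_derivative F' x) (at x)"
  shows "(F' has_integral (F b - F a)) {a..b}"
  by (rule fundamental_theorem_of_calculus[OF assms(1)])
     (use assms(2) in \<open>auto simp: has_real_derivative_iff_has_vector_derivative intro: has_vector_derivative_at_within\<close>)
lemma PRop_eval:
  assumes "length v = m" "unique_in h (PR_H n f g v)" "t \<in> dom h"
  shows "PRop m n f g (v @ [t]) = h t"
proof -
  let ?P = "\<lambda>h. unique_in h (PR_H n f g v) \<and> t \<in> dom h"
  have ex: "\<exists>h. ?P h" using assms by blast
  have "?P (SOME h. ?P h)" by (rule someI_ex[OF ex])
  then have "h t = (SOME h. ?P h) t" using assms(2,3) unfolding unique_in_def by blast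
  then show ?thesis using assms(1) unfolding PRop_def by (simp add: ex)
qed

lemma PR_H_interval:
  assumes "h \<in> PR_H n f g v" "t \<in> dom h"
  shows "{min 0 t..max 0 t} \<subseteq> dom h"
proof
  fix \<tau> assume \<tau>: "\<tau> \<in> {min 0 t..max 0 t}"
  have iv: "is_interval (dom h)" and 0: "0 \<in> dom h" using assms unfolding PR_H_def by auto
  note between = iv[unfolded is_interval_1, rule_format]
  show "\<tau> \<in> dom h"
  proof (cases "0 \<le> t")
    case True
    then show ?thesis using between[OF 0 assms(2), of \<tau>] \<tau> by simp
  next
    case False
    then show ?thesis using between[OF assms(2) 0, of \<tau>] \<tau> by simp
  qed
qed

lemma PR_H_integral_form:
  assumes h: "h \<in> PR_H n f g v" and ab: "a \<le> 0" "0 \<le> b" "{a..b} \<subseteq> dom h" and i: "i < n"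
    and \<Phi>: "\<And>\<tau>. \<tau> \<in> {a..b} \<Longrightarrow> the (g (v @ [\<tau>] @ the (h \<tau>))) ! i = \<Phi> \<tau>"
  shows "the (h 0) ! i = the (f v) ! i"
    and "\<forall>\<tau>\<in>{a..b}. (\<Phi> has_integral (the (h \<tau>) ! i - the (h a) ! i)) {a..\<tau>}"
proof -
  let ?g = "\<lambda>\<sigma>. the (g (v @ [\<sigma>] @ the (h \<sigma>))) ! i"
  have signed: "(0 \<le> \<tau> \<longrightarrow> (\<Phi> has_integral (the (h \<tau>) ! i - the (f v) ! i)) {0..\<tau>}) \<and>
      (\<tau> < 0 \<longrightarrow> (\<Phi> has_integral (the (f v) ! i - the (h \<tau>) ! i)) {\<tau>..0})" if \<tau>: "\<tau> \<in> {a..b}" for \<tau>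
  proof -
    have "(0 \<le> \<tau> \<longrightarrow> (?g has_integral (the (h \<tau>) ! i - the (f v) ! i)) {0..\<tau>}) \<and>
        (\<tau> < 0 \<longrightarrow> (?g has_integral (the (f v) ! i - the (h \<tau>) ! i)) {\<tau>..0})"
      using h i \<tau> ab(3) unfolding PR_H_def by blast
    moreover have "(?g has_integral X) S = (\<Phi> has_integral X) S" if "S \<subseteq> {a..b}" for S X
      by (rule has_integral_cong) (use that \<Phi> in auto)
    moreover have "{0..\<tau>} \<subseteq> {a..b}" "{\<tau>..0} \<subseteq> {a..b}" using \<tau> ab by auto
    ultimately show ?thesis by simp
  qed
  show "the (h 0) ! i = the (f v) ! i" "\<forall>\<tau>\<in>{a..b}. (\<Phi> has_integral (the (h \<tau>) ! i - the (h a) ! i)) {a..\<tau>}"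
    using signed_integral_eq_rebase[OF ab(1,2), of \<Phi> "\<lambda>\<tau>. the (h \<tau>) ! i" "the (f v) ! i", OF signed]
    by simp_all
qed

lemma linear_in_PR_H:
  assumes Sf: "Sf v = Some [\<phi>]" and Sg: "\<And>\<tau> y. Sg (v @ [\<tau>, y]) = Some [c]"
  shows "(\<lambda>\<tau>. Some [\<phi> + c * \<tau>]) \<in> PR_H 1 Sf Sg v"
  unfolding PR_H_def
proof (intro CollectI conjI ballI allI impI)
  let ?h = "\<lambda>\<tau>::real. Some [\<phi> + c * \<tau>]"
  show "dom ?h = {} \<or> is_interval (dom ?h) \<and> 0 \<in> dom ?h" by (auto simp: dom_def is_interval_1)
  show "v \<in> pdom Sf" using Sf by (simp add: pdom_def)
  fix \<tau> assume "\<tau> \<in> dom ?h"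
  show "length (the (?h \<tau>)) = 1" by simp
  show "v @ [\<tau>] @ the (?h \<tau>) \<in> pdom Sg" using Sg by (simp add: pdom_def)
next
  let ?h = "\<lambda>\<tau>::real. Some [\<phi> + c * \<tau>]"
  fix t i assume "t \<in> dom ?h" "i < (1::nat)"
  then have i: "i = 0" by simp
  show "((\<lambda>\<tau>. the (Sg (v @ [\<tau>] @ the (?h \<tau>))) ! i) has_integral the (?h t) ! i - the (Sf v) ! i) {0..t}"
    if "0 \<le> t"
    using has_integral_const_real[of c 0 t] that by (simp add: i Sg Sf mult.commute)
  show "((\<lambda>\<tau>. the (Sg (v @ [\<tau>] @ the (?h \<tau>))) ! i) has_integral the (Sf v) ! i - the (?h t) ! i) {t..0}"
    if "t < 0"
    using has_integral_const_real[of c t 0] that by (simp add: i Sg Sf algebra_simps)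
qed

lemma PR_H_linear_agrees:
  assumes Sf: "Sf v = Some [\<phi>]" and Sg: "\<And>\<tau> y. Sg (v @ [\<tau>, y]) = Some [c]"
    and h: "h \<in> PR_H 1 Sf Sg v" and t: "t \<in> dom h"
  shows "h t = Some [\<phi> + c * t]"
proof -
  define a where "a = min 0 t"
  have ab: "a \<le> 0" "0 \<le> max 0 t" "{a..max 0 t} \<subseteq> dom h"
    using PR_H_interval[OF h t] unfolding a_def by auto
  have single: "\<exists>y. the (h \<tau>) = [y]" if "\<tau> \<in> dom h" for \<tau>
  proof -
    have "length (the (h \<tau>)) = 1" using h that unfolding PR_H_def by blast
    then show ?thesis by (auto simp: length_Suc_conv)
  qed
  have "the (Sg (v @ [\<tau>] @ the (h \<tau>))) ! 0 = c" if \<tau>: "\<tau> \<in> {a..max 0 t}" for \<tau>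
  proof -
    obtain y where "the (h \<tau>) = [y]" using single[OF subsetD[OF ab(3) \<tau>]] by blast
    then show ?thesis using Sg by simp
  qed
  note form = PR_H_integral_form[OF h ab _ this, simplified]
  have U: "the (h \<tau>) ! 0 - the (h a) ! 0 = (\<tau> - a) * c" if "\<tau> \<in> {a..max 0 t}" for \<tau>
  proof -
    have "((\<lambda>_. c) has_integral (the (h \<tau>) ! 0 - the (h a) ! 0)) {a..\<tau>}" using form(2) that by blast
    moreover have "((\<lambda>_. c) has_integral ((\<tau> - a) * c)) {a..\<tau>}" using has_integral_const_real[of c a \<tau>] that by simp
    ultimately show ?thesis by (rule has_integral_unique)
  qed
  have "the (h t) ! 0 = \<phi> + c * t"
    using U[of t] U[of 0] ab form(1) Sf unfolding a_def by (simp add: algebra_simps)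
  moreover obtain y where "the (h t) = [y]" using single[OF t] by blast
  moreover have "h t = Some (the (h t))" using t by auto
  ultimately show ?thesis by simp
qed

lemma total_rec_PR_linear:
  assumes "total_rec n \<phi>" "total_rec (n+2) \<psi>" "\<And>v \<tau> y. length v = n \<Longrightarrow> \<psi> (v @ [\<tau>, y]) = c v"
  shows "total_rec (n+1) (\<lambda>xs. \<phi> (butlast xs) + c (butlast xs) * last xs)"
proof -
  obtain Sf where Sf: "rrec n 1 Sf" "\<And>xs. length xs = n \<Longrightarrow> Sf xs = Some [\<phi> xs]"
    using assms(1) unfolding total_rec_def by auto
  obtain Sg where Sg: "rrec (n+2) 1 Sg" "\<And>xs. length xs = n+2 \<Longrightarrow> Sg xs = Some [\<psi> xs]"
    using assms(2) unfolding total_rec_def by auto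
  have val: "PRop n 1 Sf Sg (v @ [t]) = Some [\<phi> v + c v * t]" if lv: "length v = n" for v t
  proof -
    have Sfv: "Sf v = Some [\<phi> v]" using Sf(2)[OF lv] .
    have Sgv: "Sg (v @ [\<tau>, y]) = Some [c v]" for \<tau> y using Sg(2)[of "v @ [\<tau>, y]"] assms(3)[OF lv] lv by simp
    have "unique_in (\<lambda>\<tau>. Some [\<phi> v + c v * \<tau>]) (PR_H 1 Sf Sg v)"
      unfolding unique_in_def
    proof (intro conjI ballI)
      show "(\<lambda>\<tau>. Some [\<phi> v + c v * \<tau>]) \<in> PR_H 1 Sf Sg v" by (rule linear_in_PR_H[where Sf=Sf and Sg=Sg and v=v, OF Sfv Sgv])
      fix h t' assume "h \<in> PR_H 1 Sf Sg v" "t' \<in> dom (\<lambda>\<tau>. Some [\<phi> v + c v * \<tau>]) \<inter> dom h"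
      then show "Some [\<phi> v + c v * t'] = h t'" using PR_H_linear_agrees[where Sf=Sf and Sg=Sg and v=v, OF Sfv Sgv] by simp
    qed
    then show ?thesis using PRop_eval[OF lv] by simp
  qed
  show ?thesis unfolding total_rec_def
  proof (intro exI conjI allI impI)
    show "rrec (n+1) 1 (PRop n 1 Sf Sg)" using rr_PR[OF Sf(1)] Sg(1) by (simp add: numeral_2_eq_2)
    fix xs :: "real list" assume l: "length xs = n + 1"
    then have ne: "xs \<noteq> []" by auto
    have "PRop n 1 Sf Sg (butlast xs @ [last xs]) = Some [\<phi> (butlast xs) + c (butlast xs) * last xs]"
      by (rule val) (use l in simp)
    then show "PRop n 1 Sf Sg xs = Some [\<phi> (butlast xs) + c (butlast xs) * last xs]"
      by (simp only: append_butlast_last_id[OF ne])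
  qed
qed
lemma last_of_length_Suc: "length xs = Suc n \<Longrightarrow> last xs = xs ! n"
  by (cases xs rule: rev_cases) auto

text \<open>Projections \<open>x \<mapsto> x\<^sub>i\<close> (in particular the last coordinate), by induction on the arity: the last coordinate is \<open>0 + 1 \<cdot> t\<close>
  and the others \<open>x\<^sub>i + 0 \<cdot> t\<close>, both instances of \<open>total_rec_PR_linear\<close>.\<close>
lemma total_rec_proj: "i < n \<Longrightarrow> total_rec n (\<lambda>xs. xs ! i)"
proof (induction n arbitrary: i)
  case 0 then show ?case by simp
next
  case (Suc n)
  show ?case
  proof (cases "i = n")
    case True
    have "total_rec (n+1) (\<lambda>xs. (\<lambda>_. 0) (butlast xs) + (\<lambda>_. 1) (butlast xs) * last xs)"
      by (rule total_rec_PR_linear[OF total_rec_const total_rec_const]) auto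
    then show ?thesis by (rule total_rec_cong) (auto simp: True last_of_length_Suc)
  next
    case False
    then have i: "i < n" using Suc by simp
    have "total_rec (n+1) (\<lambda>xs. (\<lambda>xs. xs ! i) (butlast xs) + (\<lambda>_. 0) (butlast xs) * last xs)"
      by (rule total_rec_PR_linear[OF Suc.IH[OF i] total_rec_const]) auto
    then show ?thesis by (rule total_rec_cong) (auto simp: nth_butlast i)
  qed
qed

lemma total_rec_last: "total_rec (n+1) (\<lambda>xs. last xs)"
  using total_rec_proj[of n "n+1"] by (rule total_rec_cong) (auto simp: last_of_length_Suc)

lemma total_rec_butlast: "total_rec n \<phi> \<Longrightarrow> total_rec (n+1) (\<lambda>xs. \<phi> (butlast xs))"
proof -
  assume \<phi>: "total_rec n \<phi>"
  have "total_rec (n+1) (\<lambda>xs. \<phi> (map (\<lambda>j. xs ! j) [0..<n]))"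
    by (rule total_rec_comp[OF \<phi>]) (auto intro: total_rec_proj)
  then show ?thesis
  proof (rule total_rec_cong)
    fix xs :: "real list" assume "length xs = n + 1"
    then have "map (\<lambda>j. xs ! j) [0..<n] = butlast xs" by (auto simp: list_eq_iff_nth_eq nth_butlast)
    then show "\<phi> (map (\<lambda>j. xs ! j) [0..<n]) = \<phi> (butlast xs)" by simp
  qed simp
qed

text \<open>Addition, multiplication and negation are again linear instances of differential
  recursion, in the last variable; composition extends them to total functions.\<close>
lemma total_rec_add: "total_rec n \<phi> \<Longrightarrow> total_rec n \<psi> \<Longrightarrow> total_rec n (\<lambda>xs. \<phi> xs + \<psi> xs)"
proof -
  have "total_rec (1+1) (\<lambda>xs. (\<lambda>xs. xs ! 0) (butlast xs) + (\<lambda>_. 1) (butlast xs) * last xs)"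
    by (rule total_rec_PR_linear[OF total_rec_proj total_rec_const]) auto
  then have "total_rec 2 (\<lambda>xs. xs ! 0 + xs ! 1)"
    by (rule total_rec_cong) (auto simp: nth_butlast last_of_length_Suc numeral_2_eq_2)
  then show "total_rec n \<phi> \<Longrightarrow> total_rec n \<psi> \<Longrightarrow> total_rec n (\<lambda>xs. \<phi> xs + \<psi> xs)"
    using total_rec_comp2 by fastforce
qed

lemma total_rec_mult: "total_rec n \<phi> \<Longrightarrow> total_rec n \<psi> \<Longrightarrow> total_rec n (\<lambda>xs. \<phi> xs * \<psi> xs)"
proof -
  have "total_rec (1+1) (\<lambda>xs. (\<lambda>_. 0) (butlast xs) + (\<lambda>v. v ! 0) (butlast xs) * last xs)"
    by (rule total_rec_PR_linear[OF total_rec_const total_rec_proj]) (auto simp: nth_append)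
  then have "total_rec 2 (\<lambda>xs. xs ! 0 * xs ! 1)"
    by (rule total_rec_cong) (auto simp: nth_butlast last_of_length_Suc numeral_2_eq_2)
  then show "total_rec n \<phi> \<Longrightarrow> total_rec n \<psi> \<Longrightarrow> total_rec n (\<lambda>xs. \<phi> xs * \<psi> xs)"
    using total_rec_comp2 by fastforce
qed

lemma total_rec_neg: "total_rec n \<phi> \<Longrightarrow> total_rec n (\<lambda>xs. - \<phi> xs)"
proof -
  have "total_rec (0+1) (\<lambda>xs. (\<lambda>_. 0) (butlast xs) + (\<lambda>_. -1) (butlast xs) * last xs)"
    by (rule total_rec_PR_linear[OF total_rec_const total_rec_const]) auto
  then have "total_rec 1 (\<lambda>xs. - (xs ! 0))" by (rule total_rec_cong) (auto simp: last_of_length_Suc)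
  then show "total_rec n \<phi> \<Longrightarrow> total_rec n (\<lambda>xs. - \<phi> xs)" using total_rec_comp1 by fastforce
qed

lemma total_rec_diff: "total_rec n \<phi> \<Longrightarrow> total_rec n \<psi> \<Longrightarrow> total_rec n (\<lambda>xs. \<phi> xs - \<psi> xs)"
  using total_rec_add[OF _ total_rec_neg] by simp

lemma total_rec_two: "total_rec n (\<lambda>_. 2)"
  using total_rec_add[OF total_rec_const[of 1] total_rec_const[of 1]] by simp

text \<open>Minimization applied to a total function \<open>\<zeta>\<close>: the value that \<open>MN\<close> selects among the
  zeros of \<open>t \<mapsto> \<zeta>(x,t)\<close> (the one of least modulus, the negative one on ties).\<close>
definition mn_value :: "(real \<Rightarrow> real) \<Rightarrow> real option" where
  "mn_value z = (let P = (\<exists>t\<ge>0. z t = 0); M = (\<exists>t\<le>0. z t = 0);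
      tp = Inf {t. t \<ge> 0 \<and> z t = 0}; tm = Sup {t. t \<le> 0 \<and> z t = 0} in
     if P \<and> M then (if tp < - tm then Some tp else Some tm)
     else if P then Some tp else if M then Some tm else None)"

lemma total_rec_MN:
  assumes "total_rec (n+1) \<zeta>" "\<And>xs. length xs = n \<Longrightarrow> mn_value (\<lambda>t. \<zeta> (xs @ [t])) = Some (r xs)"
  shows "total_rec n r"
proof -
  obtain F where F: "rrec (n+1) 1 F" "\<And>xs. length xs = n+1 \<Longrightarrow> F xs = Some [\<zeta> xs]"
    using assms(1) unfolding total_rec_def by auto
  have "MNop n F xs = map_option (\<lambda>r. [r]) (mn_value (\<lambda>t. \<zeta> (xs @ [t])))" if l: "length xs = n" for xs
  proof -
    have Fv: "F (xs @ [t]) = Some [\<zeta> (xs @ [t])]" for t using F(2) l by simp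
    have dom: "xs @ [t] \<in> pdom F" for t using Fv by (simp add: pdom_def)
    have "tplus_def F xs = (\<exists>t\<ge>0. \<zeta> (xs @ [t]) = 0)" unfolding tplus_def_def using Fv dom by auto
    moreover have "tminus_def F xs = (\<exists>t\<le>0. \<zeta> (xs @ [t]) = 0)" unfolding tminus_def_def using Fv dom by auto
    moreover have "tplus F xs = Inf {t. t \<ge> 0 \<and> \<zeta> (xs @ [t]) = 0}" unfolding tplus_def using Fv by simp
    moreover have "tminus F xs = Sup {t. t \<le> 0 \<and> \<zeta> (xs @ [t]) = 0}" unfolding tminus_def using Fv by simp
    ultimately show ?thesis unfolding MNop_def mn_value_def Let_def using l by auto
  qed
  then show ?thesis unfolding total_rec_def using rr_MN[OF F(1)] assms(2) by (intro exI[of _ "MNop n F"]) auto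
qed

lemma mn_value_pos:
  assumes "z p = 0" "p \<ge> 0" "\<And>t. z t = 0 \<Longrightarrow> p \<le> t"
  shows "mn_value z = Some p"
proof -
  have I: "Inf {t. t \<ge> 0 \<and> z t = 0} = p" by (rule cInf_eq_minimum) (use assms in auto)
  show ?thesis
  proof (cases "p = 0")
    case True
    have S: "Sup {t. t \<le> 0 \<and> z t = 0} = 0" by (rule cSup_eq_maximum) (use assms True in auto)
    show ?thesis unfolding mn_value_def Let_def I S using assms True by auto
  next
    case False
    have "\<not> (\<exists>t\<le>0. z t = 0)" using assms False by force
    then show ?thesis unfolding mn_value_def Let_def I using assms by auto
  qed
qed

lemma mn_value_neg:
  assumes "z q = 0" "q \<le> 0" "\<And>t. z t = 0 \<Longrightarrow> t \<le> q"
  shows "mn_value z = Some q"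
proof -
  have S: "Sup {t. t \<le> 0 \<and> z t = 0} = q" by (rule cSup_eq_maximum) (use assms in auto)
  show ?thesis
  proof (cases "q = 0")
    case True
    have I: "Inf {t. t \<ge> 0 \<and> z t = 0} = 0" by (rule cInf_eq_minimum) (use assms True in auto)
    show ?thesis unfolding mn_value_def Let_def I S using assms True by auto
  next
    case False
    have "\<not> (\<exists>t\<ge>0. z t = 0)" using assms False by force
    then show ?thesis unfolding mn_value_def Let_def S using assms by auto
  qed
qed

lemma mn_value_sym:
  assumes "z p = 0" "z (-p) = 0" "p \<ge> 0" "\<And>t. z t = 0 \<Longrightarrow> p \<le> \<bar>t\<bar>"
  shows "mn_value z = Some (-p)"
proof -
  have I: "Inf {t. t \<ge> 0 \<and> z t = 0} = p" by (rule cInf_eq_minimum) (use assms in force)+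
  have S: "Sup {t. t \<le> 0 \<and> z t = 0} = -p" by (rule cSup_eq_maximum) (use assms in force)+
  show ?thesis unfolding mn_value_def Let_def I S using assms by auto
qed

text \<open>\<open>|x|\<close> is minus the zero of \<open>t\<^sup>2 - x\<^sup>2\<close> selected by minimization.\<close>
lemma total_rec_abs: assumes "total_rec n \<phi>" shows "total_rec n (\<lambda>xs. \<bar>\<phi> xs\<bar>)"
proof -
  have z: "total_rec (n+1) (\<lambda>xs. last xs * last xs - \<phi> (butlast xs) * \<phi> (butlast xs))"
    by (intro total_rec_diff total_rec_mult total_rec_last total_rec_butlast assms)
  have "total_rec n (\<lambda>xs. - \<bar>\<phi> xs\<bar>)"
  proof (rule total_rec_MN[OF z])
    fix xs :: "real list" assume "length xs = n"
    show "mn_value (\<lambda>t. last (xs @ [t]) * last (xs @ [t]) - \<phi> (butlast (xs @ [t])) * \<phi> (butlast (xs @ [t]))) = Some (- \<bar>\<phi> xs\<bar>)"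
    proof (simp, rule mn_value_sym)
      fix t assume "t * t - \<phi> xs * \<phi> xs = 0"
      then have "sqrt (t*t) = sqrt (\<phi> xs * \<phi> xs)" by simp
      then show "\<bar>\<phi> xs\<bar> \<le> \<bar>t\<bar>" by (simp add: real_sqrt_mult_self)
    qed auto
  qed
  then show ?thesis using total_rec_neg by fastforce
qed

text \<open>The Heaviside step function (with value 0 at 0): \<open>heaviside x\<close> is the zero of least modulus
  of \<open>(t - 1)(t\<^sup>2 + x + |x|)\<close>.\<close>
definition heaviside :: "real \<Rightarrow> real" where "heaviside x = (if x > 0 then 1 else 0)"

lemma total_rec_heaviside: assumes "total_rec n \<phi>" shows "total_rec n (\<lambda>xs. heaviside (\<phi> xs))"
proof -
  have z: "total_rec (n+1) (\<lambda>xs. (last xs - 1) * (last xs * last xs + (\<phi> (butlast xs) + \<bar>\<phi> (butlast xs)\<bar>)))"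
    by (intro total_rec_diff total_rec_mult total_rec_add total_rec_last total_rec_butlast total_rec_abs
        total_rec_const assms) auto
  show ?thesis
  proof (rule total_rec_MN[OF z])
    fix xs :: "real list" assume "length xs = n"
    show "mn_value (\<lambda>t. (last (xs @ [t]) - 1) * (last (xs @ [t]) * last (xs @ [t]) +
        (\<phi> (butlast (xs @ [t])) + \<bar>\<phi> (butlast (xs @ [t]))\<bar>))) = Some (heaviside (\<phi> xs))"
    proof (cases "\<phi> xs > 0")
      case True
      show ?thesis unfolding heaviside_def using True
        by simp (rule mn_value_pos, auto, smt (verit) mult_nonneg_nonneg zero_le_square)
    next
      case False
      show ?thesis unfolding heaviside_def using False
        by simp (rule mn_value_pos, auto simp: abs_if mult_eq_0_iff)
    qed
  qed
qed

text \<open>\<open>1/x\<close> (for nowhere vanishing \<open>x\<close>) is the unique zero of \<open>x t - 1\<close>.\<close>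
lemma total_rec_inverse:
  assumes "total_rec n \<phi>" "\<And>xs. length xs = n \<Longrightarrow> \<phi> xs \<noteq> 0"
  shows "total_rec n (\<lambda>xs. 1 / \<phi> xs)"
proof -
  have z: "total_rec (n+1) (\<lambda>xs. \<phi> (butlast xs) * last xs - 1)"
    by (intro total_rec_diff total_rec_mult total_rec_last total_rec_butlast total_rec_const assms) auto
  show ?thesis
  proof (rule total_rec_MN[OF z])
    fix xs :: "real list" assume l: "length xs = n"
    have ne: "\<phi> xs \<noteq> 0" using assms(2)[OF l] .
    have eq: "\<phi> xs * t = 1 \<longleftrightarrow> t = 1 / \<phi> xs" for t using ne by (auto simp: field_simps)
    show "mn_value (\<lambda>t. \<phi> (butlast (xs @ [t])) * last (xs @ [t]) - 1) = Some (1 / \<phi> xs)"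
    proof (cases "\<phi> xs > 0")
      case True
      then show ?thesis by simp (rule mn_value_pos, auto simp: eq)
    next
      case False
      then show ?thesis using ne by simp (rule mn_value_neg, auto simp: eq)
    qed
  qed
qed
text \<open>Uniqueness for the harmonic oscillator \<open>p' = q, q' = -p\<close>, \<open>(p,q)(0) = (0,1)\<close>: the energy
  \<open>(p - sin)\<^sup>2 + (q - cos)\<^sup>2\<close> has derivative 0 and vanishes at 0.\<close>
lemma sin_cos_unique:
  fixes p q :: "real \<Rightarrow> real"
  assumes ab: "a \<le> 0" "0 \<le> b"
    and Ip: "\<forall>\<tau>\<in>{a..b}. (q has_integral (p \<tau> - p a)) {a..\<tau>}"
    and Iq: "\<forall>\<tau>\<in>{a..b}. ((\<lambda>\<sigma>. - p \<sigma>) has_integral (q \<tau> - q a)) {a..\<tau>}"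
    and init: "p 0 = 0" "q 0 = 1" and t: "t \<in> {a..b}"
  shows "p t = sin t \<and> q t = cos t"
proof -
  have pc: "continuous_on {a..b} p" by (rule integral_eq_continuous[OF Ip])
  have qc: "continuous_on {a..b} q" by (rule integral_eq_continuous[OF Iq])
  have pd: "(p has_real_derivative q x) (at x)" if "a < x" "x < b" for x
    by (rule integral_eq_deriv[OF Ip qc that])
  have qd: "(q has_real_derivative - p x) (at x)" if "a < x" "x < b" for x
    using integral_eq_deriv[OF Iq _ that] pc by (simp add: continuous_on_minus)
  define E where "E \<tau> = (p \<tau> - sin \<tau>) * (p \<tau> - sin \<tau>) + (q \<tau> - cos \<tau>) * (q \<tau> - cos \<tau>)" for \<tau>
  have E0: "E 0 = 0" unfolding E_def using init by simp
  have Et: "E t = 0"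
  proof (cases "a < b")
    case True
    have Ec: "continuous_on {a..b} E" unfolding E_def by (intro continuous_intros pc qc)
    have Ed: "DERIV E x :> 0" if "a < x" "x < b" for x
    proof -
      have A: "DERIV (\<lambda>\<tau>. p \<tau> - sin \<tau>) x :> q x - cos x" by (rule DERIV_diff[OF pd[OF that] DERIV_sin])
      have B: "DERIV (\<lambda>\<tau>. q \<tau> - cos \<tau>) x :> - p x - - sin x" by (rule DERIV_diff[OF qd[OF that] DERIV_cos])
      have "DERIV E x :> ((q x - cos x) * (p x - sin x) + (q x - cos x) * (p x - sin x))
           + ((- p x - - sin x) * (q x - cos x) + (- p x - - sin x) * (q x - cos x))"
        unfolding E_def by (rule DERIV_add[OF DERIV_mult[OF A A] DERIV_mult[OF B B]])
      then show ?thesis by (simp add: algebra_simps)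
    qed
    have "E t = E a" by (rule DERIV_isconst2[OF True Ec Ed]) (use t in auto)
    moreover have "E 0 = E a" by (rule DERIV_isconst2[OF True Ec Ed]) (use ab in auto)
    ultimately show ?thesis using E0 by simp
  next
    case False
    then have "t = 0" using ab t by auto
    then show ?thesis using E0 by simp
  qed
  then have "p t - sin t = 0 \<and> q t - cos t = 0" unfolding E_def by (rule iffD1[OF sum_squares_eq_zero_iff])
  then show ?thesis by simp
qed

text \<open>Sine and cosine are real recursive: \<open>(sin t, cos t) = PR(f,g)(t)\<close> for the constant
  \<open>f = (0,1)\<close> and \<open>g(t,p,q) = (q,-p)\<close>.\<close>
lemma sin_cos_in_PR_H:
  assumes S0: "S0 [] = Some [0, 1]" and Sg: "\<And>\<tau> p q. Sg [\<tau>, p, q] = Some [q, - p]"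
  shows "(\<lambda>\<tau>. Some [sin \<tau>, cos \<tau>]) \<in> PR_H 2 S0 Sg []"
  unfolding PR_H_def
proof (intro CollectI conjI ballI allI impI)
  let ?h = "\<lambda>\<tau>::real. Some [sin \<tau>, cos \<tau>]"
  show "dom ?h = {} \<or> is_interval (dom ?h) \<and> 0 \<in> dom ?h" by (auto simp: dom_def is_interval_1)
  show "[] \<in> pdom S0" using S0 by (simp add: pdom_def)
  fix \<tau> assume "\<tau> \<in> dom ?h"
  show "length (the (?h \<tau>)) = 2" by simp
  show "[] @ [\<tau>] @ the (?h \<tau>) \<in> pdom Sg" using Sg by (simp add: pdom_def)
next
  let ?h = "\<lambda>\<tau>::real. Some [sin \<tau>, cos \<tau>]"
  fix t i assume "t \<in> dom ?h" "i < (2::nat)"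
  then have i: "i = 0 \<or> i = 1" by auto
  have d0: "(sin has_real_derivative cos x) (at x)" for x by (rule DERIV_sin)
  have d1: "(cos has_real_derivative - sin x) (at x)" for x by (rule DERIV_cos)
  show "((\<lambda>\<tau>. the (Sg ([] @ [\<tau>] @ the (?h \<tau>))) ! i) has_integral the (?h t) ! i - the (S0 []) ! i) {0..t}"
    if "0 \<le> t"
    using i ftc_everywhere[OF that d0] ftc_everywhere[OF that d1] by (auto simp: Sg S0)
  show "((\<lambda>\<tau>. the (Sg ([] @ [\<tau>] @ the (?h \<tau>))) ! i) has_integral the (S0 []) ! i - the (?h t) ! i) {t..0}"
    if "t < 0"
    using i ftc_everywhere[of t 0, OF _ d0] ftc_everywhere[of t 0, OF _ d1] that by (auto simp: Sg S0)
qed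

lemma PR_H_sin_cos_agrees:
  assumes S0: "S0 [] = Some [0, 1]" and Sg: "\<And>\<tau> p q. Sg [\<tau>, p, q] = Some [q, - p]"
    and h: "h \<in> PR_H 2 S0 Sg []" and t: "t \<in> dom h"
  shows "h t = Some [sin t, cos t]"
proof -
  define a where "a = min 0 t"
  have ab: "a \<le> 0" "0 \<le> max 0 t" "{a..max 0 t} \<subseteq> dom h"
    using PR_H_interval[OF h t] unfolding a_def by auto
  define p where "p \<tau> = the (h \<tau>) ! 0" for \<tau>
  define q where "q \<tau> = the (h \<tau>) ! 1" for \<tau>
  have pair: "the (h \<tau>) = [p \<tau>, q \<tau>]" if "\<tau> \<in> dom h" for \<tau>
  proof -
    have "length (the (h \<tau>)) = 2" using h that unfolding PR_H_def by blast
    then show ?thesis unfolding p_def q_def by (auto simp: numeral_2_eq_2 length_Suc_conv)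
  qed
  have g: "the (Sg ([] @ [\<tau>] @ the (h \<tau>))) ! 0 = q \<tau>" "the (Sg ([] @ [\<tau>] @ the (h \<tau>))) ! 1 = - p \<tau>"
    if "\<tau> \<in> {a..max 0 t}" for \<tau>
    using pair[OF subsetD[OF ab(3) that]] Sg by simp_all
  note Ip = PR_H_integral_form[OF h ab, of 0 q, OF _ g(1), folded p_def]
  note Iq = PR_H_integral_form[OF h ab, of 1 "\<lambda>\<tau>. - p \<tau>", OF _ g(2), folded q_def]
  have "p t = sin t \<and> q t = cos t"
    by (rule sin_cos_unique[OF ab(1,2) Ip(2) Iq(2)]) (use Ip(1) Iq(1) S0 in \<open>auto simp: a_def\<close>)
  then show ?thesis using pair[OF t] t by auto
qed

lemma total_rec_sin_cos: "total_rec 1 (\<lambda>xs. sin (xs ! 0)) \<and> total_rec 1 (\<lambda>xs. cos (xs ! 0))"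
proof -
  have "total_rec 0 (\<lambda>_. if j = 0 then 0 else 1)" if "j < 2" for j :: nat
    by (cases "j = 0") (simp_all add: total_rec_const)
  from total_rec_map_juxt[of 2 0 "\<lambda>j _. if j = 0 then 0 else 1", OF this]
  obtain S0 where S0: "rrec 0 2 S0" "S0 [] = Some [0, 1]"
    unfolding total_rec_map_def by (auto simp: numeral_2_eq_2 upt_rec)
  have "total_rec 3 (\<lambda>xs. if j = 0 then xs ! 2 else - (xs ! 1))" if "j < 2" for j :: nat
    by (cases "j = 0") (simp_all add: total_rec_proj total_rec_neg)
  from total_rec_map_juxt[of 2 3 "\<lambda>j xs. if j = 0 then xs ! 2 else - (xs ! 1)", OF this]
  obtain Sg where Sg: "rrec 3 2 Sg" "\<And>xs. length xs = 3 \<Longrightarrow> Sg xs = Some [xs ! 2, - (xs ! 1)]"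
    unfolding total_rec_map_def by (auto simp: numeral_2_eq_2 upt_rec)
  have Sgv: "Sg [\<tau>, p, q] = Some [q, - p]" for \<tau> p q using Sg(2)[of "[\<tau>, p, q]"] by simp
  define PR where "PR = PRop 0 2 S0 Sg"
  have "unique_in (\<lambda>\<tau>. Some [sin \<tau>, cos \<tau>]) (PR_H 2 S0 Sg [])"
    unfolding unique_in_def
  proof (intro conjI ballI)
    show "(\<lambda>\<tau>. Some [sin \<tau>, cos \<tau>]) \<in> PR_H 2 S0 Sg []" by (rule sin_cos_in_PR_H[of S0 Sg, OF S0(2) Sgv])
    fix h t assume "h \<in> PR_H 2 S0 Sg []" "t \<in> dom (\<lambda>\<tau>. Some [sin \<tau>, cos \<tau>]) \<inter> dom h"
    then show "Some [sin t, cos t] = h t" using PR_H_sin_cos_agrees[of S0 Sg, OF S0(2) Sgv] by simp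
  qed
  then have val: "PR [t] = Some [sin t, cos t]" for t using PRop_eval[of "[]" 0] unfolding PR_def by simp
  have "total_rec_map 1 2 (\<lambda>xs. the (PR xs))" unfolding total_rec_map_def
    using rr_PR[OF S0(1), of Sg] Sg(1)
    by (intro exI[of _ PR]) (auto simp: PR_def numeral_3_eq_3 length_Suc_conv val[unfolded PR_def])
  note via_PR = total_rec_comp_map[OF _ this]
  show ?thesis
  proof
    show "total_rec 1 (\<lambda>xs. sin (xs ! 0))"
      using via_PR[OF total_rec_proj[of 0]] by (rule total_rec_cong) (auto simp: length_Suc_conv val)
    show "total_rec 1 (\<lambda>xs. cos (xs ! 0))"
      using via_PR[OF total_rec_proj[of 1]] by (rule total_rec_cong) (auto simp: length_Suc_conv val)
  qed
qed

lemma total_rec_sin: "total_rec n \<phi> \<Longrightarrow> total_rec n (\<lambda>xs. sin (\<phi> xs))"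
  using total_rec_comp1[OF conjunct1[OF total_rec_sin_cos]] by simp

lemma total_rec_cos: "total_rec n \<phi> \<Longrightarrow> total_rec n (\<lambda>xs. cos (\<phi> xs))"
  using total_rec_comp1[OF conjunct2[OF total_rec_sin_cos]] by simp

text \<open>\<open>-\<pi>/2\<close> is the zero of \<open>cos\<close> selected by minimization, so \<open>\<pi>\<close> is a real recursive constant.\<close>
lemma total_rec_pi: "total_rec n (\<lambda>_. pi)"
proof -
  have z: "total_rec (0+1) (\<lambda>xs. cos (last xs))" by (intro total_rec_cos total_rec_last)
  have "total_rec 0 (\<lambda>_. - (pi/2))"
  proof (rule total_rec_MN[OF z])
    fix xs :: "real list"
    have "mn_value cos = Some (- (pi/2))"
    proof (rule mn_value_sym)
      fix t :: real assume "cos t = 0"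
      show "pi/2 \<le> \<bar>t\<bar>"
      proof (rule ccontr)
        assume "\<not> pi/2 \<le> \<bar>t\<bar>"
        then have "cos t > 0" by (intro cos_gt_zero_pi) auto
        then show False using \<open>cos t = 0\<close> by simp
      qed
    qed auto
    then show "mn_value (\<lambda>t. cos (last (xs @ [t]))) = Some (- (pi / 2))" by simp
  qed
  then have "total_rec n (\<lambda>_. - (pi/2))" using total_rec_lift0 by blast
  then have "total_rec n (\<lambda>_. - (2 * - (pi/2)))" by (rule total_rec_neg[OF total_rec_mult[OF total_rec_two]])
  then show ?thesis by simp
qed
text \<open>During the first half \<open>[2\<pi>j, 2\<pi>j+\<pi>]\<close> of each period
  (\<open>sin \<ge> 0\<close>) only \<open>gain_z = sin/(1+cos)\<close> is active; during the second half (\<open>sin \<le> 0\<close>) only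
  \<open>gain_y = -sin/(1-cos)\<close>.  The correction terms in the denominators only make them total;
  \<open>select_y\<close> is 1 exactly on the first halves.\<close>
definition gain_z :: "real \<Rightarrow> real" where
  "gain_z t = heaviside (sin t) * sin t * (1 / (1 + cos t + (1 - heaviside (sin t))))"

definition gain_y :: "real \<Rightarrow> real" where
  "gain_y t = heaviside (- sin t) * (- sin t) * (1 / (1 - cos t + (1 - heaviside (- sin t))))"

definition select_y :: "real \<Rightarrow> real" where
  "select_y t = 1 - heaviside (- sin t)"

lemma cos_eq_pm1_imp_sin_zero: "cos (t::real) = 1 \<or> cos t = -1 \<Longrightarrow> sin t = 0"
  using sin_cos_squared_add[of t] by (auto simp: power2_eq_square)

lemma one_plus_cos_pos: assumes "sin (x::real) > 0" shows "1 + cos x > 0"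
proof -
  have "cos x \<noteq> -1" using assms cos_eq_pm1_imp_sin_zero[of x] by auto
  then show ?thesis using cos_ge_minus_one[of x] by linarith
qed

lemma one_minus_cos_pos: assumes "sin (x::real) < 0" shows "1 - cos x > 0"
proof -
  have "cos x \<noteq> 1" using assms cos_eq_pm1_imp_sin_zero[of x] by auto
  then show ?thesis using cos_le_one[of x] by linarith
qed

lemma gain_z_denominator: "1 + cos t + (1 - heaviside (sin t)) \<noteq> 0"
proof (cases "sin t > 0")
  case True
  then show ?thesis using one_plus_cos_pos[OF True] by (simp add: heaviside_def)
next
  case False
  then have "heaviside (sin t) = 0" by (simp add: heaviside_def)
  with cos_ge_minus_one[of t] show ?thesis by linarith
qed

lemma gain_y_denominator: "1 - cos t + (1 - heaviside (- sin t)) \<noteq> 0"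
proof (cases "sin t < 0")
  case True
  then show ?thesis using one_minus_cos_pos[OF True] by (simp add: heaviside_def)
next
  case False
  then have "heaviside (- sin t) = 0" by (simp add: heaviside_def)
  with cos_le_one[of t] show ?thesis by linarith
qed

lemma gain_z_pos: "sin t > 0 \<Longrightarrow> gain_z t = sin t / (1 + cos t)"
  by (simp add: gain_z_def heaviside_def)
lemma gain_z_zero: "sin t \<le> 0 \<Longrightarrow> gain_z t = 0"
  by (simp add: gain_z_def heaviside_def)
lemma gain_y_neg: "sin t < 0 \<Longrightarrow> gain_y t = - sin t / (1 - cos t)"
  by (simp add: gain_y_def heaviside_def)
lemma gain_y_zero: "sin t \<ge> 0 \<Longrightarrow> gain_y t = 0"
  by (simp add: gain_y_def heaviside_def)
lemma select_y_one: "sin t \<ge> 0 \<Longrightarrow> select_y t = 1"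
  by (simp add: select_y_def heaviside_def)
lemma select_y_zero: "sin t < 0 \<Longrightarrow> select_y t = 0"
  by (simp add: select_y_def heaviside_def)

lemma total_rec_gain_z: assumes \<psi>: "total_rec n \<psi>" shows "total_rec n (\<lambda>xs. gain_z (\<psi> xs))"
proof -
  have "total_rec n (\<lambda>xs. 1 + cos (\<psi> xs) + (1 - heaviside (sin (\<psi> xs))))"
    by (intro total_rec_add total_rec_cos total_rec_diff total_rec_heaviside total_rec_sin total_rec_const \<psi>) auto
  from total_rec_inverse[OF this gain_z_denominator] show ?thesis unfolding gain_z_def
    by (intro total_rec_mult total_rec_heaviside total_rec_sin \<psi>)
qed

lemma total_rec_gain_y: assumes \<psi>: "total_rec n \<psi>" shows "total_rec n (\<lambda>xs. gain_y (\<psi> xs))"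
proof -
  have "total_rec n (\<lambda>xs. 1 - cos (\<psi> xs) + (1 - heaviside (- sin (\<psi> xs))))"
    by (intro total_rec_add total_rec_cos total_rec_diff total_rec_heaviside total_rec_sin total_rec_neg
        total_rec_const \<psi>) auto
  from total_rec_inverse[OF this gain_y_denominator] show ?thesis unfolding gain_y_def
    by (intro total_rec_mult total_rec_heaviside total_rec_neg total_rec_sin \<psi>)
qed

lemma total_rec_select_y: "total_rec n \<psi> \<Longrightarrow> total_rec n (\<lambda>xs. select_y (\<psi> xs))"
  unfolding select_y_def by (intro total_rec_heaviside total_rec_sin total_rec_diff total_rec_neg total_rec_const) auto

text \<open>A state \<open>xs = v @ [t] @ y @ z\<close> (with
  \<open>v, y, z \<in> \<real>\<^sup>m\<close>) evolves by \<open>y' = gain_y t \<cdot> (z - y)\<close> and \<open>z' = gain_z t \<cdot> (f(w) - z)\<close>, where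
  \<open>f\<close> is evaluated at \<open>w = y\<close> on first halves and at \<open>w = z\<close> on second halves.\<close>
definition switch_arg :: "nat \<Rightarrow> real list \<Rightarrow> real list" where
  "switch_arg m xs =
     map (\<lambda>i. select_y (xs ! m) * xs ! (m+1+i) + (1 - select_y (xs ! m)) * xs ! (2*m+1+i)) [0..<m]"

definition switch_field :: "pfun \<Rightarrow> nat \<Rightarrow> real list \<Rightarrow> nat \<Rightarrow> real" where
  "switch_field f m xs i = (if i < m then gain_y (xs ! m) * (xs ! (2*m+1+i) - xs ! (m+1+i))
     else gain_z (xs ! m) * (the (f (switch_arg m xs)) ! (i - m) - xs ! (2*m+1+(i-m))))"

lemma total_rec_map_switch_arg: "total_rec_map (3*m+1) m (switch_arg m)"
  unfolding switch_arg_def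
  by (rule total_rec_map_juxt) (intro total_rec_add total_rec_mult total_rec_select_y total_rec_proj
      total_rec_diff total_rec_const; simp)

lemma switch_field_z_rrec:
  assumes f: "rrec m m f" and i: "i < m"
  shows "\<exists>P. rrec (3*m+1) 1 P \<and> (\<forall>xs. length xs = 3*m+1 \<longrightarrow>
           P xs = (if switch_arg m xs \<in> pdom f then Some [switch_field f m xs (m+i)] else None))"
proof -
  let ?n = "3*m+1"
  obtain A where A: "rrec ?n m A" "\<And>xs. length xs = ?n \<Longrightarrow> A xs = Some (switch_arg m xs)"
    using total_rec_map_switch_arg unfolding total_rec_map_def by auto
  obtain Pi where Pi: "rrec m 1 Pi" "\<And>ys. length ys = m \<Longrightarrow> Pi ys = Some [ys ! i]"
    using total_rec_proj[OF i] unfolding total_rec_def by auto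
  obtain Z where Z: "rrec ?n 1 Z" "\<And>xs. length xs = ?n \<Longrightarrow> Z xs = Some [xs ! (2*m+1+i)]"
    using total_rec_proj[of "2*m+1+i" ?n] i unfolding total_rec_def by auto
  obtain Ga where Ga: "rrec ?n 1 Ga" "\<And>xs. length xs = ?n \<Longrightarrow> Ga xs = Some [gain_z (xs ! m)]"
    using total_rec_gain_z[OF total_rec_proj[of m ?n]] unfolding total_rec_def by auto
  obtain Op where Op: "rrec 3 1 Op" "\<And>ys. length ys = 3 \<Longrightarrow> Op ys = Some [ys ! 1 * (ys ! 0 - ys ! 2)]"
    using total_rec_mult[OF total_rec_proj[of 1 3] total_rec_diff[OF total_rec_proj[of 0 3] total_rec_proj[of 2 3]]]
    unfolding total_rec_def by auto
  define P where "P = pcomp Op (juxt ?n [pcomp Pi (pcomp f A), Ga, Z])"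
  have "rrec ?n (length [pcomp Pi (pcomp f A), Ga, Z]) (juxt ?n [pcomp Pi (pcomp f A), Ga, Z])"
    by (rule rr_juxt) (use rr_comp[OF Pi(1) rr_comp[OF f A(1)]] Ga(1) Z(1) in auto)
  then have "rrec ?n 1 P" unfolding P_def using rr_comp[OF Op(1)] by (simp add: numeral_3_eq_3)
  moreover have "P xs = (if switch_arg m xs \<in> pdom f then Some [switch_field f m xs (m+i)] else None)"
    if l: "length xs = ?n" for xs
  proof (cases "f (switch_arg m xs)")
    case None
    then show ?thesis using l A(2) by (simp add: P_def pcomp_def juxt_def pdom_def)
  next
    case (Some ys)
    have "length ys = m" using rrec_arity[OF f Some] by simp
    then show ?thesis using l A(2) Some Pi(2) Z(2) Ga(2) i
      by (simp add: P_def pcomp_def juxt_def pdom_def Op(2) switch_field_def)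
  qed
  ultimately show ?thesis by blast
qed

lemma switch_field_rrec:
  assumes f: "rrec m m f"
  shows "\<exists>G. rrec (3*m+1) (2*m) G \<and>
     (\<forall>xs. length xs = 3*m+1 \<longrightarrow> switch_arg m xs \<in> pdom f \<longrightarrow> G xs \<noteq> None) \<and>
     (\<forall>xs ys i. G xs = Some ys \<longrightarrow> i < 2*m \<longrightarrow> ys ! i = switch_field f m xs i)"
proof -
  let ?n = "3*m+1"
  let ?spec = "\<lambda>i C. rrec ?n 1 C \<and> (\<forall>xs. length xs = ?n \<longrightarrow>
                 C xs = (if i < m \<or> switch_arg m xs \<in> pdom f then Some [switch_field f m xs i] else None))"
  have "\<exists>C. ?spec i C" if i: "i < 2*m" for i
  proof (cases "i < m")
    case True
    have "total_rec ?n (\<lambda>xs. gain_y (xs ! m) * (xs ! (2*m+1+i) - xs ! (m+1+i)))"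
      using True by (intro total_rec_mult total_rec_gain_y total_rec_diff total_rec_proj) auto
    then show ?thesis using True unfolding total_rec_def switch_field_def by auto
  next
    case False
    have "i - m < m" using False i by simp
    from switch_field_z_rrec[OF f this] obtain P where "rrec ?n 1 P" "\<forall>xs. length xs = ?n \<longrightarrow>
        P xs = (if switch_arg m xs \<in> pdom f then Some [switch_field f m xs (m + (i-m))] else None)"
      by blast
    then show ?thesis using False by (intro exI[of _ P]) simp
  qed
  then obtain C where C: "\<And>i. i < 2*m \<Longrightarrow> ?spec i (C i)" by metis
  define G where "G = juxt ?n (map C [0..<2*m])"
  have "rrec ?n (2*m) G" using rr_juxt[of "map C [0..<2*m]" ?n] C unfolding G_def by fastforce
  moreover have "G xs \<noteq> None" if "length xs = ?n" "switch_arg m xs \<in> pdom f" for xs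
    using that C unfolding G_def juxt_def by auto
  moreover have "ys ! i = switch_field f m xs i" if G: "G xs = Some ys" and i: "i < 2*m" for xs ys i
  proof -
    have l: "length xs = ?n" and d: "C i xs \<noteq> None" and y: "ys = map (\<lambda>g. hd (the (g xs))) (map C [0..<2*m])"
      using G i unfolding G_def juxt_def by (auto split: if_splits)
    have "C i xs = Some [switch_field f m xs i]" using C[OF i] l d by (auto split: if_splits)
    then show ?thesis using y i by simp
  qed
  ultimately show ?thesis by blast
qed
lemma sin_cos_period: "sin (2*pi*real j + x) = sin x" "cos (2*pi*real j + x) = cos x"
proof -
  have s: "sin (2*pi*real j) = 0" "cos (2*pi*real j) = 1"
    using sin_2npi[of j] cos_2npi[of j] by (simp_all add: mult_ac)
  show "sin (2*pi*real j + x) = sin x" "cos (2*pi*real j + x) = cos x"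
    by (simp_all add: sin_add cos_add s)
qed

lemma sin_pos_first_half: "2*pi*real j < x \<Longrightarrow> x < 2*pi*real j + pi \<Longrightarrow> sin x > 0"
  using sin_gt_zero[of "x - 2*pi*real j"] sin_cos_period(1)[of j "x - 2*pi*real j"] by simp

lemma sin_nonneg_first_half: "2*pi*real j \<le> x \<Longrightarrow> x \<le> 2*pi*real j + pi \<Longrightarrow> sin x \<ge> 0"
  using sin_ge_zero[of "x - 2*pi*real j"] sin_cos_period(1)[of j "x - 2*pi*real j"] by simp

lemma sin_neg_second_half: "2*pi*real j + pi < x \<Longrightarrow> x < 2*pi*real j + 2*pi \<Longrightarrow> sin x < 0"
  using sin_lt_zero[of "x - 2*pi*real j"] sin_cos_period(1)[of j "x - 2*pi*real j"] by simp

lemma sin_nonpos_second_half: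
  assumes "2*pi*real j + pi \<le> x" "x \<le> 2*pi*real j + 2*pi"
  shows "sin x \<le> 0"
proof (cases "x = 2*pi*real j + 2*pi")
  case True
  then show ?thesis using sin_cos_period(1)[of j "2*pi"] by simp
next
  case False
  then show ?thesis using assms sin_le_zero[of "x - 2*pi*real j"] sin_cos_period(1)[of j "x - 2*pi*real j"] by simp
qed

lemma cos_period_start: "cos (2*pi*real j) = 1" using sin_cos_period(2)[of j 0] by simp
lemma cos_period_mid: "cos (2*pi*real j + pi) = -1" using sin_cos_period(2)[of j pi] by simp
lemma cos_period_end: "cos (2*pi*real j + 2*pi) = 1" using sin_cos_period(2)[of j "2*pi"] by simp

definition period_of :: "real \<Rightarrow> nat" where "period_of t = nat \<lfloor>t / (2*pi)\<rfloor>"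

lemma period_of_eq:
  assumes "2*pi*real j \<le> t" "t < 2*pi*real j + 2*pi"
  shows "period_of t = j"
proof -
  have p: "2*pi > 0" by simp
  have "real j \<le> t / (2*pi)" using assms(1) p by (simp add: field_simps)
  moreover have "t / (2*pi) < real j + 1" using assms(2) p by (simp add: field_simps)
  ultimately have "\<lfloor>t / (2*pi)\<rfloor> = int j" by (simp add: floor_eq_iff)
  then show ?thesis unfolding period_of_def by simp
qed

lemma period_of_bounds:
  assumes "0 \<le> t"
  shows "2*pi*real (period_of t) \<le> t" "t < 2*pi*real (period_of t) + 2*pi"
proof -
  have p: "2*pi > 0" by simp
  define x where "x = t / (2*pi)"
  have tx: "t = 2*pi*x" unfolding x_def using p by simp
  have r: "real (period_of t) = of_int \<lfloor>x\<rfloor>" unfolding period_of_def x_def using assms p by simp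
  have "real (period_of t) \<le> x" using r of_int_floor_le[of x] by simp
  then show "2*pi*real (period_of t) \<le> t" unfolding tx using p by (intro mult_left_mono) auto
  have "x < real (period_of t) + 1" using r real_of_int_floor_add_one_gt[of x] by simp
  then have "2*pi*x < 2*pi*(real (period_of t) + 1)" using p by (intro mult_strict_left_mono) auto
  then show "t < 2*pi*real (period_of t) + 2*pi" unfolding tx by (simp add: algebra_simps)
qed

text \<open>The explicit solution of the iteration ODE along a sequence \<open>a 0, a 1, \<dots>\<close> of points
  (later the orbit \<open>a j = f\<^sup>j v\<close>).  On the first half of period \<open>j\<close>, \<open>y = a j\<close> is frozen while
  \<open>z\<close> moves from \<open>a j\<close> to \<open>a (j+1)\<close> along the profile \<open>(1 + cos t)/2\<close>; on the second half
  \<open>z = a (j+1)\<close> is frozen while \<open>y\<close> catches up along \<open>(1 - cos t)/2\<close>.\<close>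
definition sol_y :: "(nat \<Rightarrow> real list) \<Rightarrow> real \<Rightarrow> nat \<Rightarrow> real" where
  "sol_y a t i = (let j = period_of t in if t - 2*pi*real j \<le> pi then a j ! i
     else a (Suc j) ! i + (a j ! i - a (Suc j) ! i) * (1 - cos t) / 2)"

definition sol_z :: "(nat \<Rightarrow> real list) \<Rightarrow> real \<Rightarrow> nat \<Rightarrow> real" where
  "sol_z a t i = (let j = period_of t in if t - 2*pi*real j \<le> pi
     then a (Suc j) ! i + (a j ! i - a (Suc j) ! i) * (1 + cos t) / 2 else a (Suc j) ! i)"

definition sol :: "(nat \<Rightarrow> real list) \<Rightarrow> nat \<Rightarrow> real \<Rightarrow> real list" where
  "sol a m t = map (sol_y a t) [0..<m] @ map (sol_z a t) [0..<m]"

lemma sol_first_half: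
  assumes "2*pi*real j \<le> t" "t \<le> 2*pi*real j + pi"
  shows "sol_y a t i = a j ! i" "sol_z a t i = a (Suc j) ! i + (a j ! i - a (Suc j) ! i) * (1 + cos t) / 2"
proof -
  have "period_of t = j" by (rule period_of_eq) (use assms pi_gt_zero in linarith)+
  then show "sol_y a t i = a j ! i" "sol_z a t i = a (Suc j) ! i + (a j ! i - a (Suc j) ! i) * (1 + cos t) / 2"
    using assms unfolding sol_y_def sol_z_def by auto
qed

lemma sol_second_half:
  assumes "2*pi*real j + pi \<le> t" "t \<le> 2*pi*real j + 2*pi"
  shows "sol_y a t i = a (Suc j) ! i + (a j ! i - a (Suc j) ! i) * (1 - cos t) / 2" "sol_z a t i = a (Suc j) ! i"
proof -
  have "sol_y a t i = a (Suc j) ! i + (a j ! i - a (Suc j) ! i) * (1 - cos t) / 2 \<and> sol_z a t i = a (Suc j) ! i"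
  proof (cases "t = 2*pi*real j + 2*pi")
    case True
    have "2*pi*real (Suc j) = 2*pi*real j + 2*pi" by (simp add: algebra_simps)
    then have "period_of t = Suc j" using True by (intro period_of_eq) auto
    moreover have "cos t = 1" using True cos_period_end by simp
    ultimately show ?thesis using True pi_gt_zero unfolding sol_y_def sol_z_def by (auto simp: field_simps)
  next
    case False
    then have "period_of t = j" by (intro period_of_eq) (use assms pi_gt_zero in linarith)+
    moreover have "t - 2*pi*real j = pi \<Longrightarrow> cos t = -1"
      using cos_period_mid[of j] by (metis add_diff_cancel_left' diff_add_cancel add.commute)
    ultimately show ?thesis using assms unfolding sol_y_def sol_z_def by (auto simp: field_simps)
  qed
  then show "sol_y a t i = a (Suc j) ! i + (a j ! i - a (Suc j) ! i) * (1 - cos t) / 2" "sol_z a t i = a (Suc j) ! i"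
    by auto
qed

lemma sol_length: "length (sol a m t) = 2*m"
  unfolding sol_def by simp

lemma sol_nth_y: "i < m \<Longrightarrow> sol a m t ! i = sol_y a t i"
  unfolding sol_def by (simp add: nth_append)

lemma sol_nth_z: "i < m \<Longrightarrow> sol a m t ! (m+i) = sol_z a t i"
  unfolding sol_def by (simp add: nth_append)

lemma sol_take: "take m (sol a m t) = map (sol_y a t) [0..<m]"
  unfolding sol_def by simp

lemma sol_drop: "drop m (sol a m t) = map (sol_z a t) [0..<m]"
  unfolding sol_def by simp

lemma state_nth:
  assumes "length v = m" "length w = 2*m"
  shows "(v @ [\<sigma>] @ w) ! m = \<sigma>" "i < 2*m \<Longrightarrow> (v @ [\<sigma>] @ w) ! (m+1+i) = w ! i"
    "i < m \<Longrightarrow> (v @ [\<sigma>] @ w) ! (2*m+1+i) = w ! (m+i)" "length (v @ [\<sigma>] @ w) = 3*m+1"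
  using assms by (auto simp: nth_append)

lemma switch_arg_state:
  assumes "length v = m" "length w = 2*m"
  shows "switch_arg m (v @ [\<sigma>] @ w) = map (\<lambda>i. select_y \<sigma> * w ! i + (1 - select_y \<sigma>) * w ! (m+i)) [0..<m]"
  unfolding switch_arg_def using state_nth[OF assms] by simp

lemma switch_field_y:
  assumes "length v = m" "length w = 2*m" "i < m"
  shows "switch_field f m (v @ [\<sigma>] @ w) i = gain_y \<sigma> * (w ! (m+i) - w ! i)"
  unfolding switch_field_def using state_nth[OF assms(1,2)] assms(3) by simp

lemma switch_field_z:
  assumes "length v = m" "length w = 2*m" "i < m"
  shows "switch_field f m (v @ [\<sigma>] @ w) (m+i) = gain_z \<sigma> * (the (f (switch_arg m (v @ [\<sigma>] @ w))) ! i - w ! (m+i))"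
  unfolding switch_field_def using state_nth[OF assms(1,2)] assms(3) by simp
text \<open>Uniqueness for the scalar linear equation \<open>u' = -\<alpha> u\<close> on \<open>[s,e]\<close>, where \<open>\<alpha>\<close> may blow up at
  the right end \<open>e\<close>: it is expressed through a weight \<open>w\<close> decaying from 1 at \<open>s\<close> to 0 at \<open>e\<close>
  with \<open>w' = -\<alpha> w\<close>; every solution is then \<open>u s \<cdot> w\<close>, up to and including \<open>e\<close>.\<close>
definition decay_weight :: "real \<Rightarrow> real \<Rightarrow> (real \<Rightarrow> real) \<Rightarrow> (real \<Rightarrow> real) \<Rightarrow> bool" where
  "decay_weight s e \<alpha> w \<longleftrightarrow> s < e \<and> continuous_on {s<..<e} \<alpha> \<and> continuous_on {s..e} w \<and>
     w s = 1 \<and> w e = 0 \<and> (\<forall>\<tau>. s \<le> \<tau> \<and> \<tau> < e \<longrightarrow> w \<tau> > 0) \<and>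
     (\<forall>\<tau>. s < \<tau> \<and> \<tau> < e \<longrightarrow> (w has_real_derivative (- \<alpha> \<tau> * w \<tau>)) (at \<tau>))"

lemma linear_integral_eq_deriv:
  fixes \<phi> u \<alpha> :: "real \<Rightarrow> real"
  assumes I: "\<forall>\<tau>\<in>{s..e'}. (\<phi> has_integral (u \<tau> - u s)) {s..\<tau>}"
    and E: "\<And>\<tau>. s < \<tau> \<Longrightarrow> \<tau> < e' \<Longrightarrow> \<phi> \<tau> = - \<alpha> \<tau> * u \<tau>"
    and ac: "continuous_on {s<..<e'} \<alpha>" and x: "s < x" "x < e'"
  shows "(u has_real_derivative (- \<alpha> x * u x)) (at x)"
proof -
  define d where "d = min (x - s) (e' - x) / 2"
  have "d \<le> (x - s) / 2" "d \<le> (e' - x) / 2" "0 < d" using x unfolding d_def by auto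
  then have d: "0 < d" "s < x - d" "x + d < e'" by auto
  have I': "\<forall>\<tau>\<in>{x-d..x+d}. (\<phi> has_integral (u \<tau> - u (x-d))) {x-d..\<tau>}"
    using integral_eq_rebase[OF I, of "x-d"] d by auto
  have "continuous_on {x-d..x+d} (\<lambda>\<tau>. - \<alpha> \<tau> * u \<tau>)"
    by (intro continuous_intros continuous_on_subset[OF ac] continuous_on_subset[OF integral_eq_continuous[OF I]])
       (use d in auto)
  then have "continuous_on {x-d..x+d} \<phi>" by (rule continuous_on_eq) (use d E in auto)
  from integral_eq_deriv[OF I' this] d have "(u has_real_derivative \<phi> x) (at x)" by auto
  then show ?thesis using E[OF x] by simp
qed

lemma continuous_vanishing_at_right_end:
  fixes g :: "real \<Rightarrow> real"
  assumes gc: "continuous_on {s..e} g" and se: "s < e" and z: "\<And>t. s \<le> t \<Longrightarrow> t < e \<Longrightarrow> g t = 0"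
  shows "g e = 0"
proof -
  have "(g \<longlongrightarrow> g e) (at_left e)" by (rule continuous_on_Icc_at_leftD[OF gc se])
  moreover have "eventually (\<lambda>t. g t = 0) (at_left e)"
    using eventually_at_left_real[OF se] by eventually_elim (use z in auto)
  ultimately have "((\<lambda>_. 0) \<longlongrightarrow> g e) (at_left e)" using tendsto_cong[of g "\<lambda>_. 0" "at_left e"] by simp
  then show ?thesis by (rule tendsto_unique[OF trivial_limit_at_left_real tendsto_const, symmetric])
qed

text \<open>Before \<open>e\<close> the quotient \<open>u / w\<close> has derivative 0, hence is constant.\<close>
lemma linear_ode_unique_before_end:
  fixes \<phi> u \<alpha> w :: "real \<Rightarrow> real"
  assumes dw: "decay_weight s e \<alpha> w" and e': "s \<le> e'" "e' \<le> e"
    and I: "\<forall>\<tau>\<in>{s..e'}. (\<phi> has_integral (u \<tau> - u s)) {s..\<tau>}"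
    and E: "\<And>\<tau>. s < \<tau> \<Longrightarrow> \<tau> < e \<Longrightarrow> \<tau> \<le> e' \<Longrightarrow> \<phi> \<tau> = - \<alpha> \<tau> * u \<tau>"
    and t: "s \<le> \<tau>" "\<tau> \<le> e'" "\<tau> < e"
  shows "u \<tau> = u s * w \<tau>"
proof (cases "s = \<tau>")
  case True then show ?thesis using dw unfolding decay_weight_def by simp
next
  case False
  have ac: "continuous_on {s<..<e} \<alpha>" and wc: "continuous_on {s..e} w"
    and ws: "w s = 1" and wpos: "\<And>\<tau>. s \<le> \<tau> \<Longrightarrow> \<tau> < e \<Longrightarrow> w \<tau> > 0"
    and wd: "\<And>\<tau>. s < \<tau> \<Longrightarrow> \<tau> < e \<Longrightarrow> (w has_real_derivative (- \<alpha> \<tau> * w \<tau>)) (at \<tau>)"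
    using dw unfolding decay_weight_def by blast+
  have st: "s < \<tau>" using False t by simp
  have uc: "continuous_on {s..e'} u" by (rule integral_eq_continuous[OF I])
  have ud: "(u has_real_derivative (- \<alpha> x * u x)) (at x)" if "s < x" "x < e'" for x
  proof (rule linear_integral_eq_deriv[OF I _ _ that])
    show "\<phi> \<tau> = - \<alpha> \<tau> * u \<tau>" if "s < \<tau>" "\<tau> < e'" for \<tau> using E that e' by simp
    show "continuous_on {s<..<e'} \<alpha>" by (rule continuous_on_subset[OF ac]) (use e' in auto)
  qed
  have "continuous_on {s..\<tau>} u" by (rule continuous_on_subset[OF uc]) (use t in auto)
  moreover have "continuous_on {s..\<tau>} w" by (rule continuous_on_subset[OF wc]) (use t e' in auto)
  moreover have "\<forall>x\<in>{s..\<tau>}. w x \<noteq> 0" using wpos t by force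
  ultimately have "continuous_on {s..\<tau>} (\<lambda>t. u t / w t)" by (rule continuous_on_divide)
  moreover have "DERIV (\<lambda>t. u t / w t) x :> 0" if "s < x" "x < \<tau>" for x
  proof -
    have x: "s < x" "x < e'" "x < e" using that t by auto
    have "w x \<noteq> 0" using wpos[of x] x by simp
    from DERIV_divide[OF ud[OF x(1,2)] wd[OF x(1,3)] this]
    have "DERIV (\<lambda>t. u t / w t) x :> ((- \<alpha> x * u x) * w x - u x * (- \<alpha> x * w x)) / (w x * w x)" .
    then show ?thesis by (simp add: algebra_simps)
  qed
  ultimately have "u \<tau> / w \<tau> = u s / w s" by (rule DERIV_isconst_end[OF st])
  then show ?thesis using ws wpos[of \<tau>] t by (simp add: field_simps)
qed

text \<open>At \<open>e\<close> itself the identity follows by continuity.\<close>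
lemma linear_ode_unique:
  fixes \<phi> u \<alpha> w :: "real \<Rightarrow> real"
  assumes dw: "decay_weight s e \<alpha> w" and e': "s \<le> e'" "e' \<le> e"
    and I: "\<forall>\<tau>\<in>{s..e'}. (\<phi> has_integral (u \<tau> - u s)) {s..\<tau>}"
    and E: "\<And>\<tau>. s < \<tau> \<Longrightarrow> \<tau> < e \<Longrightarrow> \<tau> \<le> e' \<Longrightarrow> \<phi> \<tau> = - \<alpha> \<tau> * u \<tau>"
    and t: "s \<le> \<tau>" "\<tau> \<le> e'"
  shows "u \<tau> = u s * w \<tau>"
proof (cases "\<tau> < e")
  case True show ?thesis by (rule linear_ode_unique_before_end[OF dw e' I E t True])
next
  case False
  then have te: "\<tau> = e" "e' = e" using t e' by auto
  have se: "s < e" and wc: "continuous_on {s..e} w" using dw unfolding decay_weight_def by auto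
  have "continuous_on {s..e} (\<lambda>t. u t - u s * w t)"
    using integral_eq_continuous[OF I] wc te by (intro continuous_intros) auto
  moreover have "u t - u s * w t = 0" if "s \<le> t" "t < e" for t
    using linear_ode_unique_before_end[OF dw e' I E, of t] that te by simp
  ultimately have "u e - u s * w e = 0" by (rule continuous_vanishing_at_right_end[OF _ se])
  then show ?thesis using te by simp
qed

lemma decay_weight_first_half:
  "decay_weight (2*pi*real j) (2*pi*real j + pi) gain_z (\<lambda>\<sigma>. (1 + cos \<sigma>) / 2)"
proof -
  define s where "s = 2*pi*real j"
  have sinp: "sin \<sigma> > 0" if "s < \<sigma>" "\<sigma> < s + pi" for \<sigma>
    using sin_pos_first_half[of j \<sigma>] that unfolding s_def by simp
  have "continuous_on {s<..<s+pi} (\<lambda>x. sin x / (1 + cos x))"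
    using sinp one_plus_cos_pos by (force intro!: continuous_intros)
  then have "continuous_on {s<..<s+pi} gain_z" by (rule continuous_on_eq) (simp add: sinp gain_z_pos)
  moreover have "(1 + cos \<sigma>) / 2 > 0" if "s \<le> \<sigma>" "\<sigma> < s + pi" for \<sigma>
  proof (cases "\<sigma> = s")
    case True then show ?thesis using cos_period_start[of j] unfolding s_def by simp
  next
    case False then show ?thesis using that sinp[of \<sigma>] one_plus_cos_pos[of \<sigma>] by simp
  qed
  moreover have "((\<lambda>\<sigma>. (1 + cos \<sigma>) / 2) has_real_derivative (- gain_z \<sigma> * ((1 + cos \<sigma>) / 2))) (at \<sigma>)"
    if "s < \<sigma>" "\<sigma> < s + pi" for \<sigma>
  proof -
    have "((\<lambda>\<sigma>. (1 + cos \<sigma>) / 2) has_real_derivative (- sin \<sigma> / 2)) (at \<sigma>)" by (auto intro!: derivative_eq_intros)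
    moreover have "- sin \<sigma> / 2 = - gain_z \<sigma> * ((1 + cos \<sigma>) / 2)"
      using one_plus_cos_pos[OF sinp[OF that]] gain_z_pos[OF sinp[OF that]] by (simp add: field_simps)
    ultimately show ?thesis by simp
  qed
  ultimately show ?thesis unfolding decay_weight_def s_def
    using cos_period_start[of j] cos_period_mid[of j] by (auto intro!: continuous_intros)
qed

lemma decay_weight_second_half:
  "decay_weight (2*pi*real j + pi) (2*pi*real j + 2*pi) gain_y (\<lambda>\<sigma>. (1 - cos \<sigma>) / 2)"
proof -
  define s where "s = 2*pi*real j + pi"
  have sinn: "sin \<sigma> < 0" if "s < \<sigma>" "\<sigma> < s + pi" for \<sigma>
    using sin_neg_second_half[of j \<sigma>] that unfolding s_def by simp
  have "continuous_on {s<..<s+pi} (\<lambda>x. - sin x / (1 - cos x))"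
    using sinn one_minus_cos_pos by (force intro!: continuous_intros)
  then have "continuous_on {s<..<s+pi} gain_y" by (rule continuous_on_eq) (simp add: sinn gain_y_neg)
  moreover have "(1 - cos \<sigma>) / 2 > 0" if "s \<le> \<sigma>" "\<sigma> < s + pi" for \<sigma>
  proof (cases "\<sigma> = s")
    case True then show ?thesis using cos_period_mid[of j] unfolding s_def by simp
  next
    case False then show ?thesis using that sinn[of \<sigma>] one_minus_cos_pos[of \<sigma>] by simp
  qed
  moreover have "((\<lambda>\<sigma>. (1 - cos \<sigma>) / 2) has_real_derivative (- gain_y \<sigma> * ((1 - cos \<sigma>) / 2))) (at \<sigma>)"
    if "s < \<sigma>" "\<sigma> < s + pi" for \<sigma>
  proof -
    have "((\<lambda>\<sigma>. (1 - cos \<sigma>) / 2) has_real_derivative (sin \<sigma> / 2)) (at \<sigma>)" by (auto intro!: derivative_eq_intros)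
    moreover have "sin \<sigma> / 2 = - gain_y \<sigma> * ((1 - cos \<sigma>) / 2)"
      using one_minus_cos_pos[OF sinn[OF that]] gain_y_neg[OF sinn[OF that]] by (simp add: field_simps)
    ultimately show ?thesis by simp
  qed
  moreover have "s + pi = 2*pi*real j + 2*pi" unfolding s_def by simp
  ultimately show ?thesis unfolding decay_weight_def
    using cos_period_mid[of j] cos_period_end[of j] unfolding s_def by (auto intro!: continuous_intros)
qed
lemma ftc_on_piece:
  fixes U P P' \<Phi> :: "real \<Rightarrow> real"
  assumes st: "s \<le> t" "t \<le> e"
    and UP: "\<And>\<sigma>. s \<le> \<sigma> \<Longrightarrow> \<sigma> \<le> e \<Longrightarrow> U \<sigma> = P \<sigma>"
    and dP: "\<And>x. (P has_real_derivative P' x) (at x)"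
    and \<Phi>P: "\<And>x. s < x \<Longrightarrow> x < e \<Longrightarrow> \<Phi> x = P' x"
  shows "(\<Phi> has_integral (U t - U s)) {s..t}"
proof -
  have "continuous_on {s..t} P" by (rule DERIV_continuous_on) (use dP has_field_derivative_at_within in blast)
  moreover have "(P has_vector_derivative \<Phi> x) (at x)" if "x \<in> {s<..<t}" for x
    using dP[of x] \<Phi>P[of x] that st by (simp add: has_real_derivative_iff_has_vector_derivative)
  ultimately have "(\<Phi> has_integral (P t - P s)) {s..t}" by (rule fundamental_theorem_of_calculus_interior[OF st(1)])
  then show ?thesis using UP st by simp
qed

lemma switch_arg_y:
  assumes "length v = m" "length w = 2*m" "sin \<sigma> \<ge> 0"
  shows "switch_arg m (v @ [\<sigma>] @ w) = take m w"
  using switch_arg_state[OF assms(1,2)] select_y_one[OF assms(3)] assms(2)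
  by (simp add: list_eq_iff_nth_eq)

lemma switch_arg_z:
  assumes "length v = m" "length w = 2*m" "sin \<sigma> < 0"
  shows "switch_arg m (v @ [\<sigma>] @ w) = drop m w"
  using switch_arg_state[OF assms(1,2)] select_y_zero[OF assms(3)] assms(2)
  by (simp add: list_eq_iff_nth_eq)

text \<open>The ODE is then run up to time \<open>t_end = (2k-1)\<pi>\<close>, the middle
  of period \<open>k-1\<close>, where \<open>z = f\<^sup>k v\<close>.\<close>
locale iteration_ode =
  fixes f :: pfun and m :: nat and G :: pfun and F0 :: pfun and v :: "real list" and k :: nat
  assumes f: "rrec m m f"
    and G_defined: "\<And>xs. length xs = 3*m+1 \<Longrightarrow> switch_arg m xs \<in> pdom f \<Longrightarrow> G xs \<noteq> None"
    and G_value: "\<And>xs ys i. G xs = Some ys \<Longrightarrow> i < 2*m \<Longrightarrow> ys ! i = switch_field f m xs i"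
    and F0: "F0 v = Some (v @ v)"
    and lv: "length v = m"
    and k: "k \<ge> 1"
    and vk: "piter f k v \<noteq> None"
begin

definition orbit :: "nat \<Rightarrow> real list" where "orbit j = the (piter f j v)"

definition t_end :: real where "t_end = (2 * real k - 1) * pi"

definition field_along :: "(real \<Rightarrow> real list) \<Rightarrow> nat \<Rightarrow> real \<Rightarrow> real" where
  "field_along W i \<sigma> = switch_field f m (v @ [\<sigma>] @ W \<sigma>) i"

definition solves :: "(real \<Rightarrow> real list) \<Rightarrow> real \<Rightarrow> real \<Rightarrow> bool" where
  "solves W A B \<longleftrightarrow> (\<forall>\<sigma>\<in>{A..B}. length (W \<sigma>) = 2*m) \<and>
     (\<forall>i<2*m. \<forall>\<tau>\<in>{A..B}. (field_along W i has_integral (W \<tau> ! i - W A ! i)) {A..\<tau>})"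

lemma solves_restrict:
  assumes "solves W A B" "A \<le> A'" "A' \<le> B'" "B' \<le> B"
  shows "solves W A' B'"
  using assms integral_eq_rebase[of A B "field_along W _" "\<lambda>\<tau>. W \<tau> ! _" A'] unfolding solves_def by auto

lemma orbit_piter: "j \<le> k \<Longrightarrow> piter f j v = Some (orbit j)"
proof -
  assume "j \<le> k"
  then have "piter f j v \<noteq> None"
  proof (induction rule: inc_induct)
    case base then show ?case by (rule vk)
  next
    case (step n)
    then show ?case by (cases "piter f n v") auto
  qed
  then show ?thesis unfolding orbit_def by auto
qed

lemma orbit_0: "orbit 0 = v" unfolding orbit_def by simp

lemma orbit_step: "j < k \<Longrightarrow> f (orbit j) = Some (orbit (Suc j))"
  using orbit_piter[of j] orbit_piter[of "Suc j"] by simp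

lemma orbit_length: "j \<le> k \<Longrightarrow> length (orbit j) = m"
proof (induction j)
  case 0 then show ?case using orbit_0 lv by simp
next
  case (Suc j)
  then show ?case using rrec_arity[OF f orbit_step[of j]] by simp
qed

lemma orbit_in_dom: "j < k \<Longrightarrow> orbit j \<in> pdom f"
  using orbit_step unfolding pdom_def by auto

lemma map_orbit: "j \<le> k \<Longrightarrow> map (\<lambda>i. orbit j ! i) [0..<m] = orbit j"
  using orbit_length[of j] by (simp add: list_eq_iff_nth_eq)

lemma t_end_pos: "t_end > 0" unfolding t_end_def using k by simp

lemma period_before_end: "2*pi*real j \<le> t_end \<Longrightarrow> j < k"
proof -
  assume "2*pi*real j \<le> t_end"
  then have "pi * (2*real j) \<le> pi * (2*real k - 1)" unfolding t_end_def by (simp add: algebra_simps)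
  then have "2*real j \<le> 2*real k - 1" by simp
  then show "j < k" by linarith
qed

lemma second_half_before_end: "2*pi*real j + pi < t_end \<Longrightarrow> Suc j < k"
proof -
  assume "2*pi*real j + pi < t_end"
  then have "pi * (2*real j + 1) < pi * (2*real k - 1)" unfolding t_end_def by (simp add: algebra_simps)
  then have "2*real j + 1 < 2*real k - 1" by simp
  then show "Suc j < k" by linarith
qed

lemma t_end_le_periods: "t_end \<le> 2*pi*real k"
  unfolding t_end_def by (simp add: algebra_simps)

lemma sol_arg_first_half:
  assumes "j < k" "2*pi*real j \<le> x" "x \<le> 2*pi*real j + pi"
  shows "switch_arg m (v @ [x] @ sol orbit m x) = orbit j"
proof -
  have "sin x \<ge> 0" using sin_nonneg_first_half assms by blast
  then have "switch_arg m (v @ [x] @ sol orbit m x) = map (sol_y orbit x) [0..<m]"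
    using switch_arg_y[OF lv sol_length] sol_take by simp
  also have "\<dots> = map (\<lambda>i. orbit j ! i) [0..<m]"
    by (intro map_cong refl) (simp add: sol_first_half(1)[OF assms(2,3)])
  finally show ?thesis using map_orbit assms(1) by simp
qed

lemma sol_arg_second_half:
  assumes "Suc j \<le> k" "2*pi*real j + pi < x" "x < 2*pi*real j + 2*pi"
  shows "switch_arg m (v @ [x] @ sol orbit m x) = orbit (Suc j)"
proof -
  have "sin x < 0" using sin_neg_second_half assms by blast
  then have "switch_arg m (v @ [x] @ sol orbit m x) = map (sol_z orbit x) [0..<m]"
    using switch_arg_z[OF lv sol_length] sol_drop by simp
  also have "\<dots> = map (\<lambda>i. orbit (Suc j) ! i) [0..<m]"
    by (intro map_cong refl) (use assms sol_second_half(2)[of j x] in simp)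
  finally show ?thesis using map_orbit assms(1) by simp
qed

lemma sol_arg_in_dom:
  assumes "0 \<le> \<sigma>" "\<sigma> \<le> t_end"
  shows "switch_arg m (v @ [\<sigma>] @ sol orbit m \<sigma>) \<in> pdom f"
proof -
  define j where "j = period_of \<sigma>"
  have jb: "2*pi*real j \<le> \<sigma>" "\<sigma> < 2*pi*real j + 2*pi" using period_of_bounds[OF assms(1)] unfolding j_def by auto
  show ?thesis
  proof (cases "\<sigma> \<le> 2*pi*real j + pi")
    case True
    have "j < k" using jb assms(2) by (intro period_before_end) linarith
    then show ?thesis using sol_arg_first_half[OF _ jb(1) True] orbit_in_dom by simp
  next
    case False
    have "Suc j < k" using False assms(2) by (intro second_half_before_end) linarith
    then show ?thesis using sol_arg_second_half[of j \<sigma>] jb False orbit_in_dom by simp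
  qed
qed
text \<open>On each half period the explicit solution satisfies the ODE: its components are of the
  form \<open>c + d (1 \<plusminus> cos \<sigma>)/2\<close> there, and differentiating them gives the field.\<close>
lemma sol_integral_first_half:
  assumes j: "j < k" and t: "2*pi*real j \<le> t" "t \<le> 2*pi*real j + pi" and i: "i < 2*m"
  shows "(field_along (sol orbit m) i has_integral
           (sol orbit m t ! i - sol orbit m (2*pi*real j) ! i)) {2*pi*real j..t}"
proof -
  define s where "s = 2*pi*real j"
  define d where "d = orbit j ! (i-m) - orbit (Suc j) ! (i-m)"
  define P where "P \<sigma> = (if i < m then orbit j ! i else orbit (Suc j) ! (i-m) + d * (1 + cos \<sigma>) / 2)" for \<sigma>
  define P' where "P' \<sigma> = (if i < m then 0 else d * (- sin \<sigma>) / 2)" for \<sigma>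
  have hP: "sol orbit m \<sigma> ! i = P \<sigma>" if "s \<le> \<sigma>" "\<sigma> \<le> s + pi" for \<sigma>
  proof (cases "i < m")
    case True then show ?thesis using sol_nth_y sol_first_half(1)[of j \<sigma>] that unfolding P_def s_def by simp
  next
    case False
    define i' where "i' = i - m"
    have ii: "i = m + i'" "i' < m" using False i unfolding i'_def by auto
    then show ?thesis using sol_nth_z[OF ii(2)] sol_first_half(2)[of j \<sigma>] that unfolding P_def d_def s_def
      by (simp add: ii)
  qed
  have dP: "(P has_real_derivative P' x) (at x)" for x
    unfolding P_def P'_def by (cases "i < m") (auto intro!: derivative_eq_intros)
  have field: "field_along (sol orbit m) i x = P' x" if x: "s < x" "x < s + pi" for x
  proof -
    have sx: "sin x > 0" using sin_pos_first_half[of j x] x unfolding s_def by simp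
    show ?thesis
    proof (cases "i < m")
      case True
      then show ?thesis using switch_field_y[OF lv sol_length True] gain_y_zero[of x] sx
        unfolding field_along_def P'_def by simp
    next
      case False
      define i' where "i' = i - m"
      have ii: "i = m + i'" "i' < m" using False i unfolding i'_def by auto
      have arg: "switch_arg m (v @ [x] @ sol orbit m x) = orbit j"
        by (rule sol_arg_first_half[OF j]) (use x in \<open>auto simp: s_def\<close>)
      have z: "sol orbit m x ! (m + i') = orbit (Suc j) ! i' + d * (1 + cos x) / 2"
        using sol_nth_z[OF ii(2)] sol_first_half(2)[of j x] x ii unfolding s_def d_def by simp
      have "field_along (sol orbit m) i x = gain_z x * (orbit (Suc j) ! i' - sol orbit m x ! (m + i'))"
        using switch_field_z[OF lv sol_length ii(2)] arg orbit_step[OF j] ii unfolding field_along_def by simp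
      also have "\<dots> = d * (- sin x) / 2"
        unfolding z gain_z_pos[OF sx] using one_plus_cos_pos[OF sx] by (simp add: field_simps)
      finally show ?thesis unfolding P'_def using False by simp
    qed
  qed
  show ?thesis using ftc_on_piece[OF t[folded s_def] hP dP field] unfolding s_def by simp
qed

lemma sol_integral_second_half:
  assumes j: "Suc j < k" and t: "2*pi*real j + pi \<le> t" "t \<le> 2*pi*real j + 2*pi" and i: "i < 2*m"
  shows "(field_along (sol orbit m) i has_integral
           (sol orbit m t ! i - sol orbit m (2*pi*real j + pi) ! i)) {2*pi*real j + pi..t}"
proof -
  define s where "s = 2*pi*real j + pi"
  define d where "d = orbit j ! i - orbit (Suc j) ! i"
  define P where "P \<sigma> = (if i < m then orbit (Suc j) ! i + d * (1 - cos \<sigma>) / 2 else orbit (Suc j) ! (i-m))" for \<sigma>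
  define P' where "P' \<sigma> = (if i < m then d * sin \<sigma> / 2 else 0)" for \<sigma>
  have hP: "sol orbit m \<sigma> ! i = P \<sigma>" if "s \<le> \<sigma>" "\<sigma> \<le> s + pi" for \<sigma>
  proof (cases "i < m")
    case True
    then show ?thesis using sol_nth_y sol_second_half(1)[of j \<sigma>] that unfolding P_def d_def s_def by simp
  next
    case False
    define i' where "i' = i - m"
    have ii: "i = m + i'" "i' < m" using False i unfolding i'_def by auto
    then show ?thesis using sol_nth_z[OF ii(2)] sol_second_half(2)[of j \<sigma>] that unfolding P_def s_def
      by (simp add: ii)
  qed
  have dP: "(P has_real_derivative P' x) (at x)" for x
    unfolding P_def P'_def by (cases "i < m") (auto intro!: derivative_eq_intros)
  have field: "field_along (sol orbit m) i x = P' x" if x: "s < x" "x < s + pi" for x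
  proof -
    have sx: "sin x < 0" using sin_neg_second_half[of j x] x unfolding s_def by simp
    show ?thesis
    proof (cases "i < m")
      case True
      have y: "sol orbit m x ! i = orbit (Suc j) ! i + d * (1 - cos x) / 2"
        using sol_nth_y[OF True] sol_second_half(1)[of j x] x unfolding s_def d_def by simp
      have z: "sol orbit m x ! (m + i) = orbit (Suc j) ! i"
        using sol_nth_z[OF True] sol_second_half(2)[of j x] x unfolding s_def by simp
      have "field_along (sol orbit m) i x = gain_y x * (sol orbit m x ! (m + i) - sol orbit m x ! i)"
        using switch_field_y[OF lv sol_length True] unfolding field_along_def by simp
      also have "\<dots> = d * sin x / 2"
        unfolding y z gain_y_neg[OF sx] using one_minus_cos_pos[OF sx] by (simp add: field_simps)
      finally show ?thesis unfolding P'_def using True by simp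
    next
      case False
      define i' where "i' = i - m"
      have ii: "i = m + i'" "i' < m" using False i unfolding i'_def by auto
      show ?thesis using switch_field_z[OF lv sol_length ii(2)] gain_z_zero[of x] sx ii False
        unfolding field_along_def P'_def by simp
    qed
  qed
  have "s + pi = 2*pi*real j + 2*pi" unfolding s_def by simp
  then show ?thesis using ftc_on_piece[of s t "s + pi", OF _ _ hP dP field] t unfolding s_def by simp
qed

lemma sol_0: "sol orbit m 0 = v @ v"
proof -
  have "map (sol_y orbit 0) [0..<m] = map (\<lambda>i. orbit 0 ! i) [0..<m]"
    by (intro map_cong refl) (simp add: sol_first_half(1)[of 0 0])
  also have "\<dots> = v" using map_orbit[of 0] orbit_0 by simp
  finally have y: "map (sol_y orbit 0) [0..<m] = v" .
  have "map (sol_z orbit 0) [0..<m] = map (\<lambda>i. orbit 0 ! i) [0..<m]"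
    by (intro map_cong refl) (simp add: sol_first_half(2)[of 0 0] field_simps)
  also have "\<dots> = v" using map_orbit[of 0] orbit_0 by simp
  finally have z: "map (sol_z orbit 0) [0..<m] = v" .
  show ?thesis unfolding sol_def y z ..
qed

lemma sol_integral_period:
  assumes t: "2*pi*real j \<le> t" "t \<le> min t_end (2*pi*real j + 2*pi)" and i: "i < 2*m"
  shows "(field_along (sol orbit m) i has_integral
           (sol orbit m t ! i - sol orbit m (2*pi*real j) ! i)) {2*pi*real j..t}"
proof -
  define s where "s = 2*pi*real j"
  have j: "j < k" using period_before_end[of j] t by simp
  show ?thesis
  proof (cases "t \<le> s + pi")
    case True
    then show ?thesis using sol_integral_first_half[OF j t(1) _ i] unfolding s_def by simp
  next
    case False
    have j1: "Suc j < k" using second_half_before_end[of j] False t unfolding s_def by auto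
    have first: "(field_along (sol orbit m) i has_integral (sol orbit m (s+pi) ! i - sol orbit m s ! i)) {s..s+pi}"
      using sol_integral_first_half[OF j _ _ i, of "s+pi"] unfolding s_def by simp
    have second: "(field_along (sol orbit m) i has_integral (sol orbit m t ! i - sol orbit m (s+pi) ! i)) {s+pi..t}"
      using sol_integral_second_half[OF j1 _ _ i, of t] False t unfolding s_def by simp
    from has_integral_combine[OF _ _ first second] False show ?thesis unfolding s_def by simp
  qed
qed

lemma sol_solves: "solves (sol orbit m) 0 t_end"
proof -
  have "\<forall>t\<in>{0..min t_end (2*pi*real j)}. \<forall>i<2*m.
      (field_along (sol orbit m) i has_integral (sol orbit m t ! i - sol orbit m 0 ! i)) {0..t}" for j
  proof (induction j)
    case 0
    then show ?case by (auto simp: has_integral_refl)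
  next
    case (Suc j)
    have sS: "2*pi*real (Suc j) = 2*pi*real j + 2*pi" by (simp add: algebra_simps)
    show ?case
    proof (intro ballI allI impI)
      fix t i assume t: "t \<in> {0..min t_end (2*pi*real (Suc j))}" and i: "i < 2*m"
      show "(field_along (sol orbit m) i has_integral (sol orbit m t ! i - sol orbit m 0 ! i)) {0..t}"
      proof (cases "t \<le> 2*pi*real j")
        case True then show ?thesis using Suc.IH t i by auto
      next
        case False
        have "(field_along (sol orbit m) i has_integral
            (sol orbit m (2*pi*real j) ! i - sol orbit m 0 ! i)) {0..2*pi*real j}"
          using Suc.IH i False t by auto
        moreover have "(field_along (sol orbit m) i has_integral
            (sol orbit m t ! i - sol orbit m (2*pi*real j) ! i)) {2*pi*real j..t}"
          using sol_integral_period[OF _ _ i, of j t] False t sS by auto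
        ultimately show ?thesis using has_integral_combine[of 0 "2*pi*real j" t] False by force
      qed
    qed
  qed
  from this[of k] show ?thesis unfolding solves_def using sol_length t_end_le_periods by auto
qed
lemma solves_length: "solves W A B \<Longrightarrow> \<sigma> \<in> {A..B} \<Longrightarrow> length (W \<sigma>) = 2*m"
  unfolding solves_def by blast

lemma solves_integral:
  "solves W A B \<Longrightarrow> i < 2*m \<Longrightarrow> \<forall>\<tau>\<in>{A..B}. (field_along W i has_integral (W \<tau> ! i - W A ! i)) {A..\<tau>}"
  unfolding solves_def by blast

lemma state_eqI:
  assumes "length w = 2*m" "length w' = 2*m"
    and "\<And>i. i < m \<Longrightarrow> w ! i = w' ! i" "\<And>i. i < m \<Longrightarrow> w ! (m+i) = w' ! (m+i)"
  shows "w = w'"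
proof (rule nth_equalityI)
  show "length w = length w'" using assms by simp
  fix i assume i: "i < length w"
  show "w ! i = w' ! i"
  proof (cases "i < m")
    case True then show ?thesis using assms(3) by simp
  next
    case False
    then have "i = m + (i - m)" "i - m < m" using i assms(1) by auto
    then show ?thesis using assms(4)[of "i - m"] by metis
  qed
qed

lemma solves_frozen:
  assumes W: "solves W s e'" and i: "i < 2*m" and zero: "\<And>x. x \<in> {s..e'} \<Longrightarrow> field_along W i x = 0"
    and \<sigma>: "\<sigma> \<in> {s..e'}"
  shows "W \<sigma> ! i = W s ! i"
proof -
  have "W \<sigma> ! i - W s ! i = 0"
    by (rule has_integral_zero_integrand[of "field_along W i"]) (use solves_integral[OF W i] \<sigma> zero in auto)
  then show ?thesis by simp
qed

lemma solves_relax: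
  assumes W: "solves W s e'" and i: "i < 2*m" and dw: "decay_weight s e \<alpha> w" and e': "s \<le> e'" "e' \<le> e"
    and rate: "\<And>\<sigma>. s < \<sigma> \<Longrightarrow> \<sigma> < e \<Longrightarrow> \<sigma> \<le> e' \<Longrightarrow> field_along W i \<sigma> = \<alpha> \<sigma> * (c - W \<sigma> ! i)"
    and \<tau>: "\<tau> \<in> {s..e'}"
  shows "W \<tau> ! i = c + (W s ! i - c) * w \<tau>"
proof -
  have "W \<tau> ! i - c = (W s ! i - c) * w \<tau>"
    by (rule linear_ode_unique[OF dw e', where \<phi> = "field_along W i" and u = "\<lambda>\<sigma>. W \<sigma> ! i - c"])
       (use solves_integral[OF W i] rate \<tau> in \<open>auto simp: algebra_simps\<close>)
  then show ?thesis by (simp add: algebra_simps)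
qed

text \<open>Uniqueness on a first half: \<open>y\<close> stays frozen because \<open>gain_y\<close> vanishes, so \<open>f\<close> is read
  at \<open>orbit j\<close> and \<open>z\<close> relaxes towards \<open>orbit (j+1)\<close> at rate \<open>gain_z\<close>.\<close>
lemma unique_first_half:
  assumes j: "j < k" and e': "2*pi*real j \<le> e'" "e' \<le> 2*pi*real j + pi"
    and W: "solves W (2*pi*real j) e'" and W0: "W (2*pi*real j) = sol orbit m (2*pi*real j)"
    and \<tau>: "\<tau> \<in> {2*pi*real j..e'}"
  shows "W \<tau> = sol orbit m \<tau>"
proof -
  define s where "s = 2*pi*real j"
  note W = W[folded s_def] and len = solves_length[OF W[folded s_def]]
  have y: "W \<sigma> ! i = orbit j ! i" if i: "i < m" and \<sigma>: "\<sigma> \<in> {s..e'}" for i \<sigma>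
  proof -
    have "W \<sigma> ! i = W s ! i"
    proof (rule solves_frozen[OF W _ _ \<sigma>])
      fix x assume x: "x \<in> {s..e'}"
      have "sin x \<ge> 0" using sin_nonneg_first_half[of j x] x e' unfolding s_def by simp
      then show "field_along W i x = 0"
        using switch_field_y[OF lv len[OF x] i] gain_y_zero unfolding field_along_def by simp
    qed (use i in simp)
    then show ?thesis using W0 i sol_nth_y sol_first_half(1)[of j s] unfolding s_def by simp
  qed
  have z: "W \<tau> ! (m+i) = sol orbit m \<tau> ! (m+i)" if i: "i < m" for i
  proof -
    have "W \<tau> ! (m+i) = orbit (Suc j) ! i + (W s ! (m+i) - orbit (Suc j) ! i) * ((1 + cos \<tau>) / 2)"
    proof (rule solves_relax[OF W _ decay_weight_first_half[of j, folded s_def]])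
      show "m + i < 2*m" "s \<le> e'" "e' \<le> s + pi" "\<tau> \<in> {s..e'}" using i e' \<tau> unfolding s_def by auto
      fix \<sigma> assume \<sigma>: "s < \<sigma>" "\<sigma> < s + pi" "\<sigma> \<le> e'"
      have "sin \<sigma> \<ge> 0" using sin_pos_first_half[of j \<sigma>] \<sigma> unfolding s_def by simp
      moreover have l\<sigma>: "length (W \<sigma>) = 2*m" using len \<sigma> by simp
      moreover have "take m (W \<sigma>) = orbit j"
        using y \<sigma> l\<sigma> orbit_length[of j] j by (simp add: list_eq_iff_nth_eq)
      ultimately have "switch_arg m (v @ [\<sigma>] @ W \<sigma>) = orbit j" using switch_arg_y[OF lv] by simp
      then show "field_along W (m+i) \<sigma> = gain_z \<sigma> * (orbit (Suc j) ! i - W \<sigma> ! (m+i))"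
        using switch_field_z[OF lv l\<sigma> i] orbit_step[OF j] unfolding field_along_def by simp
    qed
    moreover have "W s ! (m+i) = orbit j ! i"
      using W0 i sol_nth_z sol_first_half(2)[of j s] cos_period_start[of j] unfolding s_def by (simp add: field_simps)
    ultimately show ?thesis using sol_nth_z[OF i] sol_first_half(2)[of j \<tau>] \<tau> e' unfolding s_def by simp
  qed
  show ?thesis
    by (rule state_eqI[OF len sol_length]) (use \<tau> y z sol_nth_y sol_first_half(1)[of j \<tau>] e' in \<open>auto simp: s_def\<close>)
qed

text \<open>Symmetrically on a second half: \<open>z\<close> stays frozen at \<open>orbit (j+1)\<close> and \<open>y\<close> relaxes
  towards it at rate \<open>gain_y\<close>.\<close>
lemma unique_second_half:
  assumes j: "Suc j < k" and e': "2*pi*real j + pi \<le> e'" "e' \<le> 2*pi*real j + 2*pi"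
    and W: "solves W (2*pi*real j + pi) e'" and W0: "W (2*pi*real j + pi) = sol orbit m (2*pi*real j + pi)"
    and \<tau>: "\<tau> \<in> {2*pi*real j + pi..e'}"
  shows "W \<tau> = sol orbit m \<tau>"
proof -
  define s where "s = 2*pi*real j + pi"
  note W = W[folded s_def] and len = solves_length[OF W[folded s_def]]
  have z: "W \<sigma> ! (m+i) = orbit (Suc j) ! i" if i: "i < m" and \<sigma>: "\<sigma> \<in> {s..e'}" for i \<sigma>
  proof -
    have "W \<sigma> ! (m+i) = W s ! (m+i)"
    proof (rule solves_frozen[OF W _ _ \<sigma>])
      fix x assume x: "x \<in> {s..e'}"
      have "sin x \<le> 0" using sin_nonpos_second_half[of j x] x e' unfolding s_def by simp
      then show "field_along W (m+i) x = 0"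
        using switch_field_z[OF lv len[OF x] i] gain_z_zero unfolding field_along_def by simp
    qed (use i in simp)
    then show ?thesis using W0 i sol_nth_z sol_second_half(2)[of j s] unfolding s_def by simp
  qed
  have y: "W \<tau> ! i = sol orbit m \<tau> ! i" if i: "i < m" for i
  proof -
    have "W \<tau> ! i = orbit (Suc j) ! i + (W s ! i - orbit (Suc j) ! i) * ((1 - cos \<tau>) / 2)"
    proof (rule solves_relax[OF W _ decay_weight_second_half[of j, folded s_def]])
      show "i < 2*m" "s \<le> e'" "e' \<le> 2*pi*real j + 2*pi" "\<tau> \<in> {s..e'}" using i e' \<tau> unfolding s_def by auto
      fix \<sigma> assume \<sigma>: "s < \<sigma>" "\<sigma> < 2*pi*real j + 2*pi" "\<sigma> \<le> e'"
      show "field_along W i \<sigma> = gain_y \<sigma> * (orbit (Suc j) ! i - W \<sigma> ! i)"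
        using switch_field_y[OF lv _ i] len z[OF i] \<sigma> unfolding field_along_def by simp
    qed
    moreover have "W s ! i = orbit j ! i"
      using W0 i sol_nth_y sol_second_half(1)[of j s] cos_period_mid[of j] unfolding s_def by (simp add: field_simps)
    ultimately show ?thesis using sol_nth_y[OF i] sol_second_half(1)[of j \<tau>] \<tau> e' unfolding s_def by simp
  qed
  show ?thesis
    by (rule state_eqI[OF len sol_length]) (use \<tau> y z sol_nth_z sol_second_half(2)[of j \<tau>] e' in \<open>auto simp: s_def\<close>)
qed
lemma solves_unique_period:
  assumes W: "solves W 0 t1" and t1: "t1 \<le> t_end" and start: "2*pi*real j \<le> t1"
    and Ws: "W (2*pi*real j) = sol orbit m (2*pi*real j)"
    and \<tau>: "2*pi*real j \<le> \<tau>" "\<tau> \<le> min t1 (2*pi*real j + 2*pi)"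
  shows "W \<tau> = sol orbit m \<tau>"
proof -
  define s where "s = 2*pi*real j"
  have j: "j < k" using period_before_end[of j] start t1 by simp
  have restrict: "solves W A B" if "s \<le> A" "A \<le> B" "B \<le> t1" for A B
  proof (rule solves_restrict[OF W])
    have "0 \<le> s" unfolding s_def by simp
    then show "0 \<le> A" using that by simp
  qed (use that in auto)
  define e' where "e' = min t1 (s + pi)"
  have first: "W \<sigma> = sol orbit m \<sigma>" if \<sigma>: "\<sigma> \<in> {s..e'}" for \<sigma>
  proof (rule unique_first_half[OF j])
    show "2*pi*real j \<le> e'" "e' \<le> 2*pi*real j + pi" using start unfolding e'_def s_def by auto
    show "solves W (2*pi*real j) e'" using restrict[of s e'] start unfolding e'_def s_def by auto
    show "W (2*pi*real j) = sol orbit m (2*pi*real j)" by (rule Ws)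
    show "\<sigma> \<in> {2*pi*real j..e'}" using \<sigma> unfolding s_def by simp
  qed
  show ?thesis
  proof (cases "\<tau> \<le> s + pi")
    case True then show ?thesis using first \<tau> unfolding e'_def s_def by auto
  next
    case False
    define e'' where "e'' = min t1 (s + 2*pi)"
    have j1: "Suc j < k" using second_half_before_end[of j] False \<tau> t1 unfolding s_def by auto
    have mid: "W (s + pi) = sol orbit m (s + pi)" using first False \<tau> unfolding e'_def by auto
    show ?thesis
    proof (rule unique_second_half[OF j1])
      show "2*pi*real j + pi \<le> e''" "e'' \<le> 2*pi*real j + 2*pi" using False \<tau> unfolding e''_def s_def by auto
      show "solves W (2*pi*real j + pi) e''" using restrict[of "s + pi" e''] False \<tau> unfolding e''_def s_def by auto
      show "W (2*pi*real j + pi) = sol orbit m (2*pi*real j + pi)" using mid unfolding s_def .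
      show "\<tau> \<in> {2*pi*real j + pi..e''}" using False \<tau> unfolding e''_def s_def by auto
    qed
  qed
qed

lemma solves_unique:
  assumes W: "solves W 0 t1" and W0: "W 0 = v @ v" and t1: "t1 \<le> t_end"
  shows "\<forall>\<tau>\<in>{0..t1}. W \<tau> = sol orbit m \<tau>"
proof -
  have "\<forall>\<tau>\<in>{0..min t1 (2*pi*real j)}. W \<tau> = sol orbit m \<tau>" for j
  proof (induction j)
    case 0 then show ?case using W0 sol_0 by auto
  next
    case (Suc j)
    have sS: "2*pi*real (Suc j) = 2*pi*real j + 2*pi" by (simp add: algebra_simps)
    show ?case
    proof
      fix \<tau> assume \<tau>: "\<tau> \<in> {0..min t1 (2*pi*real (Suc j))}"
      show "W \<tau> = sol orbit m \<tau>"
      proof (cases "\<tau> \<le> 2*pi*real j")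
        case True then show ?thesis using Suc.IH \<tau> by auto
      next
        case False
        then have "W (2*pi*real j) = sol orbit m (2*pi*real j)" using Suc.IH \<tau> by auto
        then show ?thesis using solves_unique_period[OF W t1] False \<tau> sS by auto
      qed
    qed
  qed
  from this[of k] show ?thesis using t1 t_end_le_periods by auto
qed

lemma PR_H_solves:
  assumes h: "h \<in> PR_H (2*m) F0 G v" and t1: "t1 \<in> dom h" "0 \<le> t1"
  shows "solves (\<lambda>\<tau>. the (h \<tau>)) 0 t1" "the (h 0) = v @ v"
proof -
  have ab: "(0::real) \<le> 0" "0 \<le> t1" "{0..t1} \<subseteq> dom h" using PR_H_interval[OF h t1(1)] t1 by auto
  have len: "length (the (h \<tau>)) = 2*m" if "\<tau> \<in> {0..t1}" for \<tau>
    using h subsetD[OF ab(3) that] unfolding PR_H_def by blast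
  have integrand: "the (G (v @ [\<tau>] @ the (h \<tau>))) ! i = field_along (\<lambda>\<tau>. the (h \<tau>)) i \<tau>"
    if "i < 2*m" "\<tau> \<in> {0..t1}" for i \<tau>
  proof -
    have "v @ [\<tau>] @ the (h \<tau>) \<in> pdom G" using h subsetD[OF ab(3) that(2)] unfolding PR_H_def by blast
    then show ?thesis using G_value that(1) unfolding pdom_def field_along_def by auto
  qed
  note form = PR_H_integral_form[OF h ab _ integrand]
  show "solves (\<lambda>\<tau>. the (h \<tau>)) 0 t1" unfolding solves_def using len form(2) by auto
  show "the (h 0) = v @ v"
    using form(1) F0 len[of 0] lv t1 by (simp add: list_eq_iff_nth_eq)
qed

definition sol_fun :: "real \<Rightarrow> real list option" where
  "sol_fun t = (if 0 \<le> t \<and> t \<le> t_end then Some (sol orbit m t) else None)"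

lemma dom_sol_fun: "dom sol_fun = {0..t_end}" unfolding sol_fun_def dom_def by auto

lemma sol_fun_in_PR_H: "sol_fun \<in> PR_H (2*m) F0 G v"
  unfolding PR_H_def
proof (intro CollectI conjI ballI allI impI)
  show "dom sol_fun = {} \<or> is_interval (dom sol_fun) \<and> 0 \<in> dom sol_fun"
    using t_end_pos unfolding dom_sol_fun by (auto simp: is_interval_1)
  show "v \<in> pdom F0" using F0 by (simp add: pdom_def)
  fix \<tau> assume "\<tau> \<in> dom sol_fun"
  then have \<tau>: "0 \<le> \<tau>" "\<tau> \<le> t_end" unfolding dom_sol_fun by auto
  then show "length (the (sol_fun \<tau>)) = 2*m" unfolding sol_fun_def using sol_length by simp
  show "v @ [\<tau>] @ the (sol_fun \<tau>) \<in> pdom G"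
    using G_defined[OF state_nth(4)[OF lv sol_length] sol_arg_in_dom[OF \<tau>]] \<tau> unfolding sol_fun_def pdom_def by simp
next
  fix t i assume "t \<in> dom sol_fun" and i: "i < 2*m"
  then have t: "0 \<le> t" "t \<le> t_end" unfolding dom_sol_fun by auto
  have "the (G (v @ [\<tau>] @ the (sol_fun \<tau>))) ! i = field_along (sol orbit m) i \<tau>" if "\<tau> \<in> {0..t}" for \<tau>
  proof -
    have "G (v @ [\<tau>] @ sol orbit m \<tau>) \<noteq> None"
      using G_defined[OF state_nth(4)[OF lv sol_length] sol_arg_in_dom] that t by auto
    then show ?thesis using G_value i that t unfolding sol_fun_def field_along_def by auto
  qed
  then have "((\<lambda>\<tau>. the (G (v @ [\<tau>] @ the (sol_fun \<tau>))) ! i) has_integral X) {0..t}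
      \<longleftrightarrow> (field_along (sol orbit m) i has_integral X) {0..t}" for X
    by (intro has_integral_cong) auto
  moreover have "(field_along (sol orbit m) i has_integral (sol orbit m t ! i - sol orbit m 0 ! i)) {0..t}"
    using sol_solves i t unfolding solves_def by auto
  ultimately show "((\<lambda>\<tau>. the (G (v @ [\<tau>] @ the (sol_fun \<tau>))) ! i) has_integral
      (the (sol_fun t) ! i - the (F0 v) ! i)) {0..t}" if "0 \<le> t"
    using t F0 sol_0 unfolding sol_fun_def by simp
  show "((\<lambda>\<tau>. the (G (v @ [\<tau>] @ the (sol_fun \<tau>))) ! i) has_integral
      (the (F0 v) ! i - the (sol_fun t) ! i)) {t..0}" if "t < 0"
    using that t by simp
qed

lemma sol_fun_unique: "unique_in sol_fun (PR_H (2*m) F0 G v)"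
  unfolding unique_in_def
proof (intro conjI sol_fun_in_PR_H ballI)
  fix h t assume h: "h \<in> PR_H (2*m) F0 G v" and t: "t \<in> dom sol_fun \<inter> dom h"
  then have t': "0 \<le> t" "t \<le> t_end" "t \<in> dom h" unfolding dom_sol_fun by auto
  have "the (h t) = sol orbit m t"
    using solves_unique[OF PR_H_solves[OF h t'(3,1)] t'(2)] t' by auto
  then show "sol_fun t = h t" using t' unfolding sol_fun_def by auto
qed

lemma PR_value_at_end: "PRop m (2*m) F0 G (v @ [t_end]) = Some (sol orbit m t_end)"
  using PRop_eval[OF lv sol_fun_unique, of t_end] t_end_pos unfolding dom_sol_fun sol_fun_def by simp

lemma sol_end: "drop m (sol orbit m t_end) = the (piter f k v)"
proof -
  have k1: "k - 1 < k" "Suc (k - 1) = k" using k by auto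
  have T: "t_end = 2*pi*real (k-1) + pi" unfolding t_end_def using k by (simp add: algebra_simps of_nat_diff)
  have "map (sol_z orbit t_end) [0..<m] = map (\<lambda>i. orbit k ! i) [0..<m]"
    by (intro map_cong refl) (use sol_first_half(2)[of "k-1" t_end] T cos_period_mid[of "k-1"] k1 in simp)
  then show ?thesis using sol_drop map_orbit[of k] unfolding orbit_def by simp
qed

end

lemma total_rec_map_double: "total_rec_map m (2*m) (\<lambda>xs. xs @ xs)"
proof -
  have "total_rec_map m (2*m) (\<lambda>xs. map (\<lambda>j. xs ! (if j < m then j else j - m)) [0..<2*m])"
    by (rule total_rec_map_juxt) (auto intro: total_rec_proj)
  moreover have "map (\<lambda>j. xs ! (if j < m then j else j - m)) [0..<2*m] = xs @ xs" if "length xs = m" for xs :: "real list"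
    using that by (simp add: list_eq_iff_nth_eq nth_append)
  ultimately show ?thesis by (rule total_rec_map_cong)
qed

lemma rescale_time_rrec:
  "\<exists>J. rrec (m+1) (m+1) J \<and> (\<forall>v \<kappa>. length v = m \<longrightarrow> J (v @ [\<kappa>]) = Some (v @ [(2 * \<kappa> - 1) * pi]))"
proof -
  define c where "c j = (if j < m then (\<lambda>xs. xs ! j) else (\<lambda>xs::real list. (2 * xs ! m - 1) * pi))" for j
  have "total_rec (m+1) (c j)" if "j < m+1" for j
    using that unfolding c_def
    by (cases "j < m") (auto intro!: total_rec_proj total_rec_mult total_rec_diff total_rec_pi total_rec_two total_rec_const)
  from total_rec_map_juxt[of "m+1" "m+1" c, OF this] obtain J where J: "rrec (m+1) (m+1) J"
    "\<And>xs. length xs = m+1 \<Longrightarrow> J xs = Some (map (\<lambda>j. c j xs) [0..<m+1])"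
    unfolding total_rec_map_def by blast
  have "J (v @ [\<kappa>]) = Some (v @ [(2 * \<kappa> - 1) * pi])" if "length v = m" for v \<kappa>
    using J(2)[of "v @ [\<kappa>]"] that by (simp add: c_def list_eq_iff_nth_eq nth_append)
  then show ?thesis using J(1) by blast
qed

lemma total_rec_map_drop: "total_rec_map (2*m) m (drop m)"
proof -
  have "total_rec_map (2*m) m (\<lambda>ys. map (\<lambda>j. ys ! (m + j)) [0..<m])"
    by (rule total_rec_map_juxt) (auto intro: total_rec_proj)
  moreover have "map (\<lambda>j. ys ! (m + j)) [0..<m] = drop m ys" if "length ys = 2*m" for ys :: "real list"
    using that by (simp add: list_eq_iff_nth_eq)
  ultimately show ?thesis by (rule total_rec_map_cong)
qed

lemma PR_computes_iterate:
  assumes f: "rrec m m f"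
    and G: "\<And>xs. length xs = 3*m+1 \<Longrightarrow> switch_arg m xs \<in> pdom f \<Longrightarrow> G xs \<noteq> None"
      "\<And>xs ys i. G xs = Some ys \<Longrightarrow> i < 2*m \<Longrightarrow> ys ! i = switch_field f m xs i"
    and D: "\<And>xs. length xs = m \<Longrightarrow> D xs = Some (xs @ xs)"
    and v: "length v = m" "k \<ge> 1" "v \<in> pdom (piter f k)"
  shows "map_option (drop m) (PRop m (2*m) D G (v @ [(2 * real k - 1) * pi])) = piter f k v"
proof -
  interpret iteration_ode f m G D v k using f G D v by unfold_locales (auto simp: pdom_def)
  have "PRop m (2*m) D G (v @ [(2 * real k - 1) * pi]) = Some (sol orbit m t_end)"
    using PR_value_at_end unfolding t_end_def .
  then show ?thesis using sol_end v(3) unfolding pdom_def by auto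
qed

theorem lemma4p1:
  fixes f :: pfun and m :: nat
  assumes "rrec m m f"
  shows "\<exists>g. rrec (m + 1) m g \<and>
           (\<forall>v (k::nat). length v = m \<and> k \<ge> 1 \<and> v \<in> pdom (piter f k) \<longrightarrow>
              v @ [real k] \<in> pdom g \<and> g (v @ [real k]) = piter f k v)"
proof -
  obtain G where G: "rrec (3*m+1) (2*m) G"
    "\<And>xs. length xs = 3*m+1 \<Longrightarrow> switch_arg m xs \<in> pdom f \<Longrightarrow> G xs \<noteq> None"
    "\<And>xs ys i. G xs = Some ys \<Longrightarrow> i < 2*m \<Longrightarrow> ys ! i = switch_field f m xs i"
    using switch_field_rrec[OF assms] by blast
  obtain D where D: "rrec m (2*m) D" "\<And>xs. length xs = m \<Longrightarrow> D xs = Some (xs @ xs)"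
    using total_rec_map_double unfolding total_rec_map_def by blast
  obtain J where J: "rrec (m+1) (m+1) J" "\<And>v \<kappa>. length v = m \<Longrightarrow> J (v @ [\<kappa>]) = Some (v @ [(2 * \<kappa> - 1) * pi])"
    using rescale_time_rrec by blast
  obtain Z where Z: "rrec (2*m) m Z" "\<And>ys. length ys = 2*m \<Longrightarrow> Z ys = Some (drop m ys)"
    using total_rec_map_drop unfolding total_rec_map_def by blast
  have PR: "rrec (m+1) (2*m) (PRop m (2*m) D G)" using rr_PR[OF D(1), of G] G(1) by (simp add: algebra_simps)
  define g where "g = pcomp Z (pcomp (PRop m (2*m) D G) J)"
  show ?thesis
  proof (intro exI conjI allI impI)
    show "rrec (m+1) m g" unfolding g_def by (intro rr_comp[OF Z(1)] rr_comp[OF PR J(1)])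
    fix v k assume "length v = m \<and> k \<ge> 1 \<and> v \<in> pdom (piter f k)"
    then have v: "length v = m" "k \<ge> 1" "v \<in> pdom (piter f k)" by simp_all
    note iterate = PR_computes_iterate[where f=f and m=m and G=G and D=D and v=v and k=k, OF assms G(2,3) D(2) v]
    obtain w where w: "PRop m (2*m) D G (v @ [(2 * real k - 1) * pi]) = Some w" "Some (drop m w) = piter f k v"
    proof (cases "PRop m (2*m) D G (v @ [(2 * real k - 1) * pi])")
      case None
      then show ?thesis using iterate v(3) unfolding pdom_def by simp
    next
      case (Some w)
      moreover have "Some (drop m w) = piter f k v" using iterate Some by simp
      ultimately show ?thesis by (rule that)
    qed
    have "length w = 2*m" using rrec_arity[OF PR w(1)] by simp
    then have g: "g (v @ [real k]) = Some (drop m w)"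
      using J(2)[OF v(1)] w(1) Z(2) unfolding g_def pcomp_def by simp
    then show "g (v @ [real k]) = piter f k v" using w(2) by simp
    show "v @ [real k] \<in> pdom g" using g unfolding pdom_def by simp
  qed
qed

end
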